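(* Let $n$ be large, let $\delta,\sigma,\beta>0$ be constants, $d=\delta\left(\frac{\log n}{\log\log n}\right)^{1/3}$, and $B=L_n(\frac13,\beta)$. Fix an integer $b$ with $0<b\le\frac12L_n(\frac13,\sigma)$. Let $a$ be uniformly random in $\{0,\dots,b-1\}$ and $m$ uniformly random among the integers in $\left[2^{-1/d}L_n\!\left(\frac23,\delta^{-1}\right),L_n\!\left(\frac23,\delta^{-1}\right)\right]$. Then $$\mathbb{P}_{a,m}\big(a-bm\text{ is }B\text{-smooth}\big)=L_n\!\left(\tfrac13,\tfrac{\delta^{-1}}{3\beta}(1+\mathbf{o}(1))\right)^{-1}.$$
   Context: $L_x(\alpha,c)=\exp\!\big(c(\log x)^{\alpha}(\log\log x)^{1-\alpha}\big)$. An integer $z$ is $B$-smooth if every prime dividing $z$ is at most $B$. $\mathbf{o}(1)$ denotes a quantity tending to $0$ as $n\to\infty$. *)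

theory Defs
  imports "HOL-Computational_Algebra.Primes" Complex_Main
begin

definition Lfun :: "real \<Rightarrow> real \<Rightarrow> real \<Rightarrow> real" where
  "Lfun x \<alpha> c = exp (c * (ln x) powr \<alpha> * (ln (ln x)) powr (1 - \<alpha>))"

definition smooth :: "real \<Rightarrow> int \<Rightarrow> bool" where
  "smooth B z \<longleftrightarrow> (\<forall>p::int. prime p \<and> p dvd z \<longrightarrow> real_of_int p \<le> B)"

definition m_range :: "nat \<Rightarrow> real \<Rightarrow> int set" where
  "m_range n \<delta> =
     (let d = \<delta> * (ln (real n) / ln (ln (real n))) powr (1/3);
          hi = Lfun (real n) (2/3) (1/\<delta>);
          lo = 2 powr (-1/d) * hi
      in {m::int. lo \<le> real_of_int m \<and> real_of_int m \<le> hi})"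

definition smooth_prob :: "nat \<Rightarrow> real \<Rightarrow> real \<Rightarrow> int \<Rightarrow> real" where
  "smooth_prob n \<delta> \<beta> b =
     real (card {(a, m). a \<in> {0..<b} \<and> m \<in> m_range n \<delta> \<and>
                  smooth (Lfun (real n) (1/3) \<beta>) (a - b * m)})
     / (real (card {0..<b}) * real (card (m_range n \<delta>)))"

end

theory Submission
  imports Defs "HOL-Number_Theory.Prime_Powers" "HOL-Real_Asymp.Real_Asymp"
begin

(* Writing a - bm = -(bm - a), the pairs (a, m) correspond to the integers of the window
   (b (m1 - 1), b m2], so the probability is the density of B-smooth integers in a window of
   relative length about 1/d just below T = b m2, where u = log T / log B is about
   (log n / log log n)^(1/3) / (beta delta).  Both bounds are elementary.
   From below, Chebyshev's identity sum_{d | n} Lambda(d) = log n gives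
   sum_{d in D} Lambda(d) Psi(t/d) <= log t Psi(t) for D = (B^(1 - 2 theta), B^(1 - theta)], and
   by Mertens' estimate the k-th of the about u / (1 - 2 theta) steps from B up to T loses only a
   factor theta / (2 (k + 2)); hence the density is at least u^(-u (1 + O(theta) + o(1))).
   From above, Rankin's trick with eta = log u / log B bounds the count by
   T^(1 - eta) exp (4 sum_{p <= B} p^(eta - 1)), and this prime sum is O(u).
   Since u^u = L_n(1/3, 1/(3 beta delta))^(1 + o(1)), the two bounds match. *)

section \<open>Chebyshev and Mertens estimates\<close>

lemma finite_nat_real_le: "finite {n::nat. real n \<le> T}"
proof (rule finite_subset)
  show "{n::nat. real n \<le> T} \<subseteq> {..nat \<lceil>T\<rceil>}"
  proof
    fix n :: nat assume "n \<in> {n. real n \<le> T}"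
    then have "int n \<le> \<lceil>T\<rceil>" by (metis ceiling_mono ceiling_of_nat mem_Collect_eq)
    then show "n \<in> {..nat \<lceil>T\<rceil>}" by simp
  qed
qed simp

lemma card_multiples_atLeastAtMost:
  assumes "0 < d"
  shows "card {n \<in> {1..N}. d dvd n} = N div d"
proof -
  have "{n \<in> {1..N}. d dvd n} = (\<lambda>k. d * k) ` {1..N div d}"
  proof safe
    fix n assume n: "n \<in> {1..N}" "d dvd n"
    then obtain k where k: "n = d * k" by auto
    have "k \<ge> 1" using n k by (cases k) auto
    moreover have "k \<le> N div d" using n k assms
      by (simp add: less_eq_div_iff_mult_less_eq mult.commute)
    ultimately show "n \<in> (\<lambda>k. d * k) ` {1..N div d}" using k by auto
  next
    fix k assume "k \<in> {1..N div d}"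
    then show "d * k \<in> {1..N}" using assms
      by (auto simp: less_eq_div_iff_mult_less_eq mult.commute)
  qed auto
  moreover have "inj_on (\<lambda>k. d * k) {1..N div d}" using assms by (auto simp: inj_on_def)
  ultimately show ?thesis by (simp add: card_image)
qed

lemma ln_fact_eq_sum_mangoldt:
  assumes "N \<le> N'"
  shows "ln (fact N) = (\<Sum>d=1..N'. mangoldt d * real (N div d))"
proof -
  have fact_eq: "(fact N :: real) = (\<Prod>n=1..N. real n)" by (simp add: fact_prod)
  have "ln (fact N :: real) = (\<Sum>n=1..N. ln (real n))"
    unfolding fact_eq by (subst ln_prod) auto
  also have "\<dots> = (\<Sum>n=1..N. \<Sum>d=1..N'. if d dvd n then mangoldt d else 0)"
  proof (rule sum.cong[OF refl])
    fix n assume n: "n \<in> {1..N}"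
    have "ln (real n) = (\<Sum>d | d dvd n. mangoldt d)" using n by (simp add: mangoldt_sum)
    also have "{d. d dvd n} = {d \<in> {1..N'}. d dvd n}" using n assms
      by (auto dest: dvd_imp_le intro: Nat.gr0I)
    also have "(\<Sum>d\<in>\<dots>. mangoldt d) = (\<Sum>d=1..N'. if d dvd n then mangoldt d else 0)"
      by (rule sum.inter_filter) simp
    finally show "ln (real n) = (\<Sum>d=1..N'. if d dvd n then mangoldt d else 0)" .
  qed
  also have "\<dots> = (\<Sum>d=1..N'. \<Sum>n=1..N. if d dvd n then mangoldt d else 0)"
    by (rule sum.swap)
  also have "\<dots> = (\<Sum>d=1..N'. mangoldt d * real (N div d))"
  proof (intro sum.cong refl)
    fix d assume "d \<in> {1..N'}"
    have "(\<Sum>n=1..N. if d dvd n then mangoldt d else 0) = (\<Sum>n\<in>{n \<in> {1..N}. d dvd n}. mangoldt d :: real)"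
      by (rule sum.inter_filter[symmetric]) simp
    then show "(\<Sum>n=1..N. if d dvd n then mangoldt d else 0) = mangoldt d * real (N div d)"
      using \<open>d \<in> {1..N'}\<close> card_multiples_atLeastAtMost[of d N] by simp
  qed
  finally show ?thesis .
qed

definition chebyshev_psi :: "nat \<Rightarrow> real" where
  "chebyshev_psi N = (\<Sum>d=1..N. mangoldt d)"

lemma ln_fact_double_minus_le: "ln (fact (2*M)) - 2 * ln (fact M) \<le> 2 * real M * ln 2"
proof -
  have "real ((2*M) choose M) = fact (2*M) / (fact M * fact M)"
    by (subst binomial_fact) auto
  then have "ln (fact (2*M)) - 2 * ln (fact M) = ln (real ((2*M) choose M))"
    by (simp add: ln_div ln_mult)
  also have "\<dots> \<le> ln (2 ^ (2*M))"
    by (subst ln_le_cancel_iff) (auto simp: binomial_le_pow2 intro!: Nat.gr0I)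
  also have "\<dots> = 2 * real M * ln 2" by (simp add: ln_realpow)
  finally show ?thesis .
qed

text \<open>In \<open>log (2M choose M)\<close> every \<open>\<Lambda>(d)\<close> occurs with the weight \<open>\<lfloor>2M/d\<rfloor> - 2\<lfloor>M/d\<rfloor> \<ge> 0\<close>,
  which is \<open>1\<close> for \<open>M < d \<le> 2M\<close>.\<close>
lemma chebyshev_psi_double_minus_le: "chebyshev_psi (2*M) - chebyshev_psi M \<le> 2 * real M * ln 2"
proof -
  define w where "w d = real ((2*M) div d) - 2 * real (M div d)" for d
  have w_nonneg: "0 \<le> w d" for d
  proof -
    have "2 * (M div d) * d \<le> 2 * M" by (metis div_mult_mod_eq le_add1 mult.assoc mult_le_mono2)
    then have "2 * (M div d) \<le> (2*M) div d"
      by (cases "d = 0") (simp_all add: less_eq_div_iff_mult_less_eq)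
    then show ?thesis unfolding w_def by linarith
  qed
  have w_high: "w d = 1" if "d \<in> {M+1..2*M}" for d
  proof -
    have "(2*M) div d < 2" using that by (simp add: div_less_iff_less_mult)
    moreover have "1 \<le> (2*M) div d" using that by (simp add: div_greater_zero_iff Suc_le_eq)
    ultimately have "(2*M) div d = 1" by simp
    moreover have "M div d = 0" using that by auto
    ultimately show ?thesis unfolding w_def by simp
  qed
  have split: "{1..2*M} = {1..M} \<union> {M+1..2*M}" by auto
  have "chebyshev_psi (2*M) - chebyshev_psi M = (\<Sum>d=M+1..2*M. mangoldt d * w d)"
    unfolding chebyshev_psi_def split by (subst sum.union_disjoint) (auto simp: w_high)
  also have "\<dots> \<le> (\<Sum>d=1..2*M. mangoldt d * w d)"
    by (intro sum_mono2) (auto simp: mangoldt_nonneg w_nonneg)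
  also have "\<dots> = ln (fact (2*M)) - 2 * ln (fact M)"
    using ln_fact_eq_sum_mangoldt[of "2*M" "2*M"] ln_fact_eq_sum_mangoldt[of M "2*M"]
    by (simp add: w_def algebra_simps sum_subtractf sum_distrib_left)
  also have "\<dots> \<le> 2 * real M * ln 2" by (rule ln_fact_double_minus_le)
  finally show ?thesis .
qed

lemma chebyshev_psi_le: "chebyshev_psi N \<le> 4 * real N"
proof (induction N rule: less_induct)
  case (less N)
  show ?case
  proof (cases "N = 0")
    case True then show ?thesis by (simp add: chebyshev_psi_def)
  next
    case False
    define M where "M = N div 2"
    have "M < N" using False by (simp add: M_def)
    have "chebyshev_psi (2*M) \<le> 4 * real M + 2 * real M * ln 2"
      using chebyshev_psi_double_minus_le[of M] less[OF \<open>M < N\<close>] by linarith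
    also have "\<dots> \<le> 6 * real M" using ln_2_less_1 mult_left_le[of "ln 2" "real M"] by simp
    finally have even: "chebyshev_psi (2*M) \<le> 6 * real M" .
    show ?thesis
    proof (cases "even N")
      case True then show ?thesis using even by (simp add: M_def)
    next
      case False
      then have N: "N = Suc (2*M)" by (simp add: M_def)
      have "mangoldt (Suc (2*M)) \<le> ln (real (Suc (2*M)))" by (rule mangoldt_le) simp
      also have "\<dots> \<le> real (2*M)"
        using ln_add_one_self_le_self[of "real (2*M)"] by (simp add: add.commute)
      finally show ?thesis using even unfolding N by (simp add: chebyshev_psi_def)
    qed
  qed
qed

lemma ln_fact_le: "ln (fact N :: real) \<le> real N * ln (real N)"
proof (cases "N = 0")
  case False
  have "(fact N :: real) \<le> real N ^ N" by (metis fact_le_power of_nat_fact of_nat_le_iff of_nat_power)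
  then show ?thesis using False by (simp add: ln_realpow[symmetric])
qed simp

lemma ln_fact_ge: "real N * ln (real N) - real N \<le> ln (fact N :: real)"
proof (induction N)
  case (Suc N)
  have "real N * ln (real (Suc N)) - real N * ln (real N) \<le> 1"
  proof (cases "N = 0")
    case False
    have "1 + 1 / real N = real (Suc N) / real N" using False by (simp add: field_simps)
    then have "ln (real (Suc N)) - ln (real N) = ln (1 + 1 / real N)"
      using False by (simp add: ln_div)
    also have "\<dots> \<le> 1 / real N" by (rule ln_add_one_self_le_self) simp
    finally have "real N * (ln (real (Suc N)) - ln (real N)) \<le> real N * (1 / real N)"
      by (intro mult_left_mono) auto
    then show ?thesis using False by (simp add: algebra_simps)
  qed simp
  moreover have "ln (fact (Suc N) :: real) = ln (real (Suc N)) + ln (fact N)"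
    by (simp add: ln_mult)
  ultimately show ?case using Suc by (simp add: algebra_simps)
qed simp

lemma mertens_sum_le:
  assumes "1 \<le> N"
  shows "(\<Sum>d=1..N. mangoldt d / real d) \<le> ln (real N) + 4"
proof -
  have "real N * (\<Sum>d=1..N. mangoldt d / real d) = (\<Sum>d=1..N. mangoldt d * (real N / real d))"
    by (simp add: sum_distrib_left field_simps)
  also have "\<dots> \<le> (\<Sum>d=1..N. mangoldt d * real (N div d) + mangoldt d)"
  proof (intro sum_mono)
    fix d assume d: "d \<in> {1..N}"
    have "N < (N div d + 1) * d" using d dividend_less_div_times[of d N] by (simp add: algebra_simps)
    then have "real N < (real (N div d) + 1) * real d" by (metis of_nat_1 of_nat_add of_nat_less_iff of_nat_mult)
    then have "real N / real d \<le> real (N div d) + 1" using d by (simp add: divide_le_eq)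
    then show "mangoldt d * (real N / real d) \<le> mangoldt d * real (N div d) + mangoldt d"
      using mult_left_mono[OF _ mangoldt_nonneg] by (fastforce simp: algebra_simps)
  qed
  also have "\<dots> = ln (fact N) + chebyshev_psi N"
    by (simp add: sum.distrib ln_fact_eq_sum_mangoldt[of N N] chebyshev_psi_def)
  also have "\<dots> \<le> real N * (ln (real N) + 4)"
    using ln_fact_le[of N] chebyshev_psi_le[of N] by (simp add: algebra_simps)
  finally show ?thesis using assms by (simp add: mult_le_cancel_left)
qed

lemma mertens_sum_ge:
  assumes "1 \<le> N"
  shows "ln (real N) - 1 \<le> (\<Sum>d=1..N. mangoldt d / real d)"
proof -
  have "real N * (ln (real N) - 1) \<le> ln (fact N)" using ln_fact_ge[of N] by (simp add: algebra_simps)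
  also have "\<dots> = (\<Sum>d=1..N. mangoldt d * real (N div d))" by (rule ln_fact_eq_sum_mangoldt) simp
  also have "\<dots> \<le> (\<Sum>d=1..N. mangoldt d * (real N / real d))"
    by (intro sum_mono mult_left_mono) (auto simp: mangoldt_nonneg of_nat_div_le_of_nat)
  also have "\<dots> = real N * (\<Sum>d=1..N. mangoldt d / real d)"
    by (simp add: sum_distrib_left field_simps)
  finally show ?thesis using assms by (simp add: mult_le_cancel_left)
qed

lemma nat_real_interval_eq:
  assumes "0 \<le> L" "L \<le> T"
  shows "{n::nat. L < real n \<and> real n \<le> T} = {Suc (nat \<lfloor>L\<rfloor>)..nat \<lfloor>T\<rfloor>}"
proof -
  have "L < real n \<longleftrightarrow> Suc (nat \<lfloor>L\<rfloor>) \<le> n" for n :: nat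
    using assms floor_less_iff[of L "int n"] by (simp add: nat_less_iff Suc_le_eq)
  moreover have "real n \<le> T \<longleftrightarrow> n \<le> nat \<lfloor>T\<rfloor>" for n :: nat
    using assms le_floor_iff[of "int n" T] by (simp add: le_nat_iff)
  ultimately show ?thesis by auto
qed

lemma card_nat_real_interval_ge:
  assumes "0 \<le> L" "L \<le> T"
  shows "T - L - 1 \<le> real (card {n::nat. L < real n \<and> real n \<le> T})"
proof -
  have "card {n::nat. L < real n \<and> real n \<le> T} = nat \<lfloor>T\<rfloor> - nat \<lfloor>L\<rfloor>"
    using assms by (simp add: nat_real_interval_eq)
  moreover have "real (nat \<lfloor>T\<rfloor> - nat \<lfloor>L\<rfloor>) = real_of_int \<lfloor>T\<rfloor> - real_of_int \<lfloor>L\<rfloor>"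
    using assms by (simp add: of_nat_diff floor_mono nat_mono)
  ultimately show ?thesis by linarith
qed

lemma mertens_sum_interval_ge:
  assumes "1 \<le> a" "a \<le> b"
  shows "ln b - ln a - 6 \<le> (\<Sum>d\<in>{d::nat. a < real d \<and> real d \<le> b}. mangoldt d / real d)"
proof -
  define N1 where "N1 = nat \<lfloor>a\<rfloor>"
  define N2 where "N2 = nat \<lfloor>b\<rfloor>"
  have N1: "1 \<le> N1" "real N1 \<le> a" using assms unfolding N1_def by linarith+
  have "b - 1 < real_of_int \<lfloor>b\<rfloor>" "1 \<le> \<lfloor>b\<rfloor>" using assms by linarith+
  moreover have "real N2 = real_of_int \<lfloor>b\<rfloor>" unfolding N2_def using calculation by simp
  ultimately have N2: "b / 2 \<le> real N2" "N1 \<le> N2"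
    using assms unfolding N1_def N2_def by (linarith, simp add: floor_mono nat_mono)
  have "{1..N2} = {1..N1} \<union> {Suc N1..N2}" using N1 N2 by auto
  then have sum: "(\<Sum>d=1..N2. mangoldt d / real d) =
      (\<Sum>d=1..N1. mangoldt d / real d) + (\<Sum>d=Suc N1..N2. mangoldt d / real d :: real)"
    by (simp add: sum.union_disjoint)
  have "ln (real N2) - 1 \<le> (\<Sum>d=1..N2. mangoldt d / real d)" using N1 N2 by (intro mertens_sum_ge) auto
  moreover have "(\<Sum>d=1..N1. mangoldt d / real d) \<le> ln (real N1) + 4" using N1 by (intro mertens_sum_le)
  moreover have "ln (real N1) \<le> ln a" using N1 by simp
  moreover have "ln b - ln 2 \<le> ln (real N2)"
    using N2 assms ln_le_cancel_iff[of "b / 2" "real N2"] by (simp add: ln_div)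
  ultimately have "ln b - ln a - 6 \<le> (\<Sum>d=Suc N1..N2. mangoldt d / real d :: real)"
    using ln_2_less_1 unfolding sum by linarith
  also have "{Suc N1..N2} = {d::nat. a < real d \<and> real d \<le> b}"
    using assms unfolding N1_def N2_def by (simp add: nat_real_interval_eq)
  finally show ?thesis .
qed

section \<open>Counting smooth numbers from below\<close>

definition smooth_nat :: "real \<Rightarrow> nat \<Rightarrow> bool" where
  "smooth_nat y n \<longleftrightarrow> (\<forall>p. prime p \<and> p dvd n \<longrightarrow> real p \<le> y)"

definition smooth_count :: "real \<Rightarrow> real \<Rightarrow> real \<Rightarrow> nat" where
  "smooth_count y L T = card {n::nat. L < real n \<and> real n \<le> T \<and> smooth_nat y n}"

lemma smooth_nat_if_le: "0 < n \<Longrightarrow> real n \<le> y \<Longrightarrow> smooth_nat y n"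
  unfolding smooth_nat_def by (meson dvd_imp_le of_nat_le_iff order_trans)

lemma smooth_nat_mult: "smooth_nat y a \<Longrightarrow> smooth_nat y b \<Longrightarrow> smooth_nat y (a * b)"
  unfolding smooth_nat_def by (auto simp: prime_dvd_mult_iff)

lemma finite_nat_window: "finite {n::nat. L < real n \<and> real n \<le> T \<and> P n}"
  by (rule finite_subset[OF _ finite_nat_real_le[of T]]) auto

lemma smooth_count_quotient_le:
  assumes "0 < d" "real d \<le> y"
  shows "smooth_count y (\<rho> * (t / real d)) (t / real d)
           \<le> card {n::nat. \<rho> * t < real n \<and> real n \<le> t \<and> smooth_nat y n \<and> d dvd n}"
  unfolding smooth_count_def
proof (rule card_inj_on_le)
  show "inj_on ((*) d) {m. \<rho> * (t / real d) < real m \<and> real m \<le> t / real d \<and> smooth_nat y m}"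
    using assms by (auto simp: inj_on_def)
  show "finite {n::nat. \<rho> * t < real n \<and> real n \<le> t \<and> smooth_nat y n \<and> d dvd n}"
    by (rule finite_nat_window)
  show "(*) d ` {m. \<rho> * (t / real d) < real m \<and> real m \<le> t / real d \<and> smooth_nat y m}
      \<subseteq> {n. \<rho> * t < real n \<and> real n \<le> t \<and> smooth_nat y n \<and> d dvd n}"
  proof (rule image_subsetI)
    fix m assume "m \<in> {m. \<rho> * (t / real d) < real m \<and> real m \<le> t / real d \<and> smooth_nat y m}"
    then have m: "\<rho> * (t / real d) < real m" "real m \<le> t / real d" "smooth_nat y m" by simp_all
    have "0 < real d" using assms by simp
    then have "\<rho> * t < real (d * m)" "real (d * m) \<le> t" using m by (simp_all add: field_simps)
    moreover have "smooth_nat y (d * m)" by (rule smooth_nat_mult[OF smooth_nat_if_le]) (use assms m in auto)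
    ultimately show "d * m \<in> {n. \<rho> * t < real n \<and> real n \<le> t \<and> smooth_nat y n \<and> d dvd n}" by simp
  qed
qed

text \<open>Each \<open>n \<le> t\<close> has \<open>\<Sum>\<^sub>d\<^sub>|\<^sub>n \<Lambda>(d) = log n \<le> log t\<close>, and the multiples of \<open>d\<close> among the
  \<open>y\<close>-smooth \<open>n \<le> t\<close> contain \<open>d\<close> times the \<open>y\<close>-smooth numbers up to \<open>t/d\<close>.\<close>
lemma sum_mangoldt_smooth_count_le:
  fixes D :: "nat set"
  assumes D: "finite D" "\<And>d. d \<in> D \<Longrightarrow> 0 < d \<and> real d \<le> y" and "0 \<le> \<rho>" "1 \<le> t"
  shows "(\<Sum>d\<in>D. mangoldt d * real (smooth_count y (\<rho> * (t / real d)) (t / real d)))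
           \<le> ln t * real (smooth_count y (\<rho> * t) t)"
proof -
  define A where "A = {n::nat. \<rho> * t < real n \<and> real n \<le> t \<and> smooth_nat y n}"
  have finA: "finite A" unfolding A_def by (rule finite_nat_window)
  have A_pos: "0 < n" "real n \<le> t" if "n \<in> A" for n
  proof -
    have "0 \<le> \<rho> * t" "\<rho> * t < real n" "real n \<le> t" using that assms unfolding A_def by auto
    then show "0 < n" "real n \<le> t" by simp_all
  qed
  have "(\<Sum>d\<in>D. mangoldt d * real (smooth_count y (\<rho> * (t / real d)) (t / real d)))
      \<le> (\<Sum>d\<in>D. mangoldt d * real (card {n \<in> A. d dvd n}))"
    using D(2) smooth_count_quotient_le
    by (intro sum_mono mult_left_mono) (auto simp: A_def mangoldt_nonneg conj_assoc)
  also have "\<dots> = (\<Sum>d\<in>D. \<Sum>n\<in>A. if d dvd n then mangoldt d else 0)"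
    using finA by (simp add: mult.commute flip: sum.inter_filter)
  also have "\<dots> = (\<Sum>n\<in>A. \<Sum>d\<in>D. if d dvd n then mangoldt d else 0)"
    by (rule sum.swap)
  also have "\<dots> \<le> (\<Sum>n\<in>A. ln t)"
  proof (rule sum_mono)
    fix n assume "n \<in> A"
    have "(\<Sum>d\<in>D. if d dvd n then mangoldt d else 0) = (\<Sum>d\<in>{d \<in> D. d dvd n}. mangoldt d :: real)"
      using D(1) by (simp flip: sum.inter_filter)
    also have "\<dots> \<le> (\<Sum>d | d dvd n. mangoldt d)"
      using A_pos[OF \<open>n \<in> A\<close>] by (intro sum_mono2) (auto simp: mangoldt_nonneg finite_divisors_nat)
    also have "\<dots> = ln (real n)" using A_pos[OF \<open>n \<in> A\<close>] by (simp add: mangoldt_sum)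
    also have "\<dots> \<le> ln t" using A_pos[OF \<open>n \<in> A\<close>] by simp
    finally show "(\<Sum>d\<in>D. if d dvd n then mangoldt d else 0) \<le> ln t" .
  qed
  also have "\<dots> = ln t * real (smooth_count y (\<rho> * t) t)"
    unfolding smooth_count_def A_def by simp
  finally show ?thesis .
qed

lemma smooth_count_ge_of_le_bound:
  assumes "0 \<le> \<rho>" "\<rho> < 1" "2 / (1 - \<rho>) \<le> t" "t \<le> y"
  shows "(1 - \<rho>) * t / 2 \<le> real (smooth_count y (\<rho> * t) t)"
proof -
  have t2: "2 \<le> (1 - \<rho>) * t" using assms by (simp add: divide_le_eq mult.commute)
  have "0 < 2 / (1 - \<rho>)" using assms by simp
  then have "0 < t" using assms by linarith
  then have "0 \<le> \<rho> * t" using assms by simp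
  then have "{n::nat. \<rho> * t < real n \<and> real n \<le> t \<and> smooth_nat y n} = {n::nat. \<rho> * t < real n \<and> real n \<le> t}"
    using \<open>t \<le> y\<close> by (auto intro: smooth_nat_if_le Nat.gr0I)
  moreover have "t - \<rho> * t - 1 \<le> real (card {n::nat. \<rho> * t < real n \<and> real n \<le> t})"
    using \<open>0 \<le> \<rho> * t\<close> assms t2 by (intro card_nat_real_interval_ge) (auto simp: algebra_simps)
  ultimately show ?thesis using t2 unfolding smooth_count_def by (simp add: algebra_simps)
qed

lemma mertens_sum_powr_interval_ge:
  assumes "1 < y" "0 < \<theta>" "\<theta> \<le> 1/2" "12 \<le> \<theta> * ln y"
  shows "\<theta> * ln y / 2 \<le> (\<Sum>d\<in>{d::nat. y powr (1 - 2*\<theta>) < real d \<and> real d \<le> y powr (1 - \<theta>)}. mangoldt d / real d)"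
proof -
  have "ln (y powr (1 - \<theta>)) - ln (y powr (1 - 2*\<theta>)) - 6
      \<le> (\<Sum>d\<in>{d::nat. y powr (1 - 2*\<theta>) < real d \<and> real d \<le> y powr (1 - \<theta>)}. mangoldt d / real d)"
    using assms by (intro mertens_sum_interval_ge ge_one_powr_ge_zero powr_mono) auto
  moreover have "ln (y powr (1 - \<theta>)) - ln (y powr (1 - 2*\<theta>)) = \<theta> * ln y"
    using assms by (simp add: ln_powr algebra_simps)
  ultimately show ?thesis using assms by linarith
qed

lemma quotient_powr_bounds:
  assumes y: "1 < y" and \<theta>: "0 < \<theta>" "\<theta> \<le> 1/4"
    and d: "y powr (1 - 2*\<theta>) < d" "d \<le> y powr (1 - \<theta>)"
    and t: "y powr (1 + real k * (1 - 2*\<theta>)) < t" "t \<le> y powr (1 + real (Suc k) * (1 - 2*\<theta>))"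
  shows "y powr \<theta> \<le> t / d" "t / d \<le> y powr (1 + real k * (1 - 2*\<theta>))"
proof -
  have "0 < y powr (1 - 2*\<theta>)" "0 < y powr (1 + real k * (1 - 2*\<theta>))" using y by simp_all
  then have "0 < d" "0 < t" using d t by linarith+
  have "y powr \<theta> \<le> y powr (real k * (1 - 2*\<theta>) + \<theta>)" using y \<theta> by (intro powr_mono) auto
  also have "\<dots> = y powr (1 + real k * (1 - 2*\<theta>)) / y powr (1 - \<theta>)"
    using y by (simp add: powr_diff[symmetric])
  also have "\<dots> \<le> t / d"
    using t d \<open>0 < d\<close> \<open>0 < t\<close> by (intro frac_le) auto
  finally show "y powr \<theta> \<le> t / d" .
  have "t / d \<le> y powr (1 + real (Suc k) * (1 - 2*\<theta>)) / y powr (1 - 2*\<theta>)"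
    using t d \<open>0 < d\<close> \<open>0 < t\<close> by (intro frac_le) auto
  also have "\<dots> = y powr (1 + real k * (1 - 2*\<theta>))"
    using y by (simp add: powr_diff[symmetric] algebra_simps)
  finally show "t / d \<le> y powr (1 + real k * (1 - 2*\<theta>))" .
qed

text \<open>One step of the recursion: the divisors \<open>d \<in> (y\<^sup>1\<^sup>-\<^sup>2\<^sup>\<theta>, y\<^sup>1\<^sup>-\<^sup>\<theta>]\<close> bring \<open>t\<close> down into the range
  where the bound is already known, and their \<open>\<Lambda>(d)/d\<close> sum to at least \<open>\<theta> log y / 2\<close>.\<close>
lemma smooth_count_ge_step:
  assumes y: "1 < y" and \<theta>: "0 < \<theta>" "\<theta> \<le> 1/4" "12 \<le> \<theta> * ln y"
    and \<rho>: "0 \<le> \<rho>" "\<rho> < 1" "2 / (1 - \<rho>) \<le> y powr \<theta>" and "0 \<le> c"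
    and IH: "\<And>s. 2 / (1 - \<rho>) \<le> s \<Longrightarrow> s \<le> y powr (1 + real k * (1 - 2*\<theta>)) \<Longrightarrow>
               (1 - \<rho>) * s * c \<le> real (smooth_count y (\<rho> * s) s)"
    and t: "y powr (1 + real k * (1 - 2*\<theta>)) < t" "t \<le> y powr (1 + real (Suc k) * (1 - 2*\<theta>))"
  shows "(1 - \<rho>) * t * c * (\<theta> / (2 * (real k + 2))) \<le> real (smooth_count y (\<rho> * t) t)"
proof -
  define \<alpha> where "\<alpha> = 1 - 2*\<theta>"
  define D where "D = {d::nat. y powr \<alpha> < real d \<and> real d \<le> y powr (1 - \<theta>)}"
  define X where "X = (1 - \<rho>) * t * c"
  have \<alpha>: "1/2 \<le> \<alpha>" "\<alpha> \<le> 1" using \<theta> unfolding \<alpha>_def by auto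
  have y_\<alpha>: "1 \<le> y powr \<alpha>" using y \<alpha> by (intro ge_one_powr_ge_zero) auto
  have "1 \<le> y powr (1 + real k * \<alpha>)" using y \<alpha> by (intro ge_one_powr_ge_zero) auto
  then have t1: "1 \<le> t" using t unfolding \<alpha>_def by simp
  have D: "0 < d \<and> real d \<le> y" if "d \<in> D" for d
    using that y_\<alpha> y \<theta> powr_le_cancel_iff[of y "1 - \<theta>" 1] unfolding D_def by (auto intro!: Nat.gr0I)
  have finD: "finite D" unfolding D_def by (rule finite_subset[OF _ finite_nat_real_le]) auto
  have IH_d: "(1 - \<rho>) * (t / real d) * c \<le> real (smooth_count y (\<rho> * (t / real d)) (t / real d))"
    if "d \<in> D" for d
  proof (rule IH)
    have "y powr \<theta> \<le> t / real d" "t / real d \<le> y powr (1 + real k * (1 - 2*\<theta>))"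
      using quotient_powr_bounds[OF y \<theta>(1,2) _ _ t] that unfolding D_def \<alpha>_def by auto
    then show "2 / (1 - \<rho>) \<le> t / real d" "t / real d \<le> y powr (1 + real k * (1 - 2*\<theta>))"
      using \<rho> by linarith+
  qed
  have "X * (\<theta> * ln y / 2) \<le> X * (\<Sum>d\<in>D. mangoldt d / real d)"
    using mertens_sum_powr_interval_ge[of y \<theta>] y \<theta> \<rho> \<open>0 \<le> c\<close> t1
    unfolding X_def D_def \<alpha>_def by (intro mult_left_mono) auto
  also have "\<dots> = (\<Sum>d\<in>D. mangoldt d * ((1 - \<rho>) * (t / real d) * c))"
    unfolding X_def sum_distrib_left by (simp add: field_simps)
  also have "\<dots> \<le> (\<Sum>d\<in>D. mangoldt d * real (smooth_count y (\<rho> * (t / real d)) (t / real d)))"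
    using IH_d by (intro sum_mono mult_left_mono) (auto simp: mangoldt_nonneg)
  also have "\<dots> \<le> ln t * real (smooth_count y (\<rho> * t) t)"
    using finD D \<rho> t1 by (intro sum_mangoldt_smooth_count_le) auto
  also have "\<dots> \<le> ((real k + 2) * ln y) * real (smooth_count y (\<rho> * t) t)"
  proof (intro mult_right_mono)
    have "ln t \<le> ln (y powr (1 + real (Suc k) * \<alpha>))"
      using t t1 y unfolding \<alpha>_def by (subst ln_le_cancel_iff) auto
    also have "\<dots> \<le> (real k + 2) * ln y"
      using y \<alpha> mult_left_le[of \<alpha> "real (Suc k)"] by (simp add: ln_powr mult_right_mono)
    finally show "ln t \<le> (real k + 2) * ln y" .
  qed simp
  finally have main: "X * (\<theta> * ln y / 2) \<le> ((real k + 2) * ln y) * real (smooth_count y (\<rho> * t) t)" .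
  have "0 < (real k + 2) * ln y" using y by simp
  then have "X * (\<theta> / (2 * (real k + 2))) = X * (\<theta> * ln y / 2) / ((real k + 2) * ln y)"
    by (simp add: field_simps)
  also have "\<dots> \<le> real (smooth_count y (\<rho> * t) t)"
    using \<open>0 < (real k + 2) * ln y\<close> by (subst pos_divide_le_eq) (use main in \<open>auto simp: ac_simps\<close>)
  finally show ?thesis unfolding X_def .
qed

definition smooth_lower_coeff :: "real \<Rightarrow> nat \<Rightarrow> real" where
  "smooth_lower_coeff \<theta> k = (1/2) * (\<theta>/2)^k / fact (Suc k)"

lemma smooth_lower_coeff_pos: "0 < \<theta> \<Longrightarrow> 0 < smooth_lower_coeff \<theta> k"
  unfolding smooth_lower_coeff_def by simp

lemma smooth_lower_coeff_Suc:
  "smooth_lower_coeff \<theta> (Suc k) = smooth_lower_coeff \<theta> k * (\<theta> / (2 * (real k + 2)))"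
proof -
  have "(fact (Suc (Suc k)) :: real) = (real k + 2) * fact (Suc k)"
    by (simp add: algebra_simps)
  then show ?thesis unfolding smooth_lower_coeff_def by (simp add: field_simps)
qed

lemma smooth_lower_coeff_Suc_le:
  assumes "0 < \<theta>" "\<theta> \<le> 1"
  shows "smooth_lower_coeff \<theta> (Suc k) \<le> smooth_lower_coeff \<theta> k"
proof -
  have "\<theta> / (2 * (real k + 2)) \<le> 1" using assms by (simp add: field_simps)
  then show ?thesis
    unfolding smooth_lower_coeff_Suc by (rule mult_left_le) (use smooth_lower_coeff_pos[of \<theta> k] assms in auto)
qed

lemma smooth_count_ge:
  assumes y: "1 < y" and \<theta>: "0 < \<theta>" "\<theta> \<le> 1/4" "12 \<le> \<theta> * ln y"
    and \<rho>: "0 \<le> \<rho>" "\<rho> < 1" "2 / (1 - \<rho>) \<le> y powr \<theta>"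
  shows "2 / (1 - \<rho>) \<le> t \<Longrightarrow> t \<le> y powr (1 + real k * (1 - 2*\<theta>)) \<Longrightarrow>
         (1 - \<rho>) * t * smooth_lower_coeff \<theta> k \<le> real (smooth_count y (\<rho> * t) t)"
proof (induction k arbitrary: t)
  case 0
  then show ?case using \<rho> y smooth_count_ge_of_le_bound[of \<rho> t y] by (simp add: smooth_lower_coeff_def)
next
  case (Suc k)
  have "0 < 1 - \<rho>" using \<rho> by simp
  then have "0 < t" using Suc.prems by (smt (verit) divide_pos_pos)
  show ?case
  proof (cases "t \<le> y powr (1 + real k * (1 - 2*\<theta>))")
    case True
    have "(1 - \<rho>) * t * smooth_lower_coeff \<theta> (Suc k) \<le> (1 - \<rho>) * t * smooth_lower_coeff \<theta> k"
      using \<theta> \<open>0 < 1 - \<rho>\<close> \<open>0 < t\<close> by (intro mult_left_mono smooth_lower_coeff_Suc_le) auto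
    also have "\<dots> \<le> real (smooth_count y (\<rho> * t) t)" using Suc.IH[OF Suc.prems(1) True] .
    finally show ?thesis .
  next
    case False
    then show ?thesis
      using smooth_count_ge_step[OF y \<theta> \<rho>, of "smooth_lower_coeff \<theta> k" k t] Suc
        smooth_lower_coeff_pos[OF \<theta>(1), of k]
      by (simp add: smooth_lower_coeff_Suc mult.assoc)
  qed
qed

lemma smooth_lower_coeff_ge:
  assumes \<theta>: "0 < \<theta>" "\<theta> \<le> 1" and "real k \<le> K"
  shows "exp (- (ln 2 + K * ln (2/\<theta>) + (K + 1) * ln (K + 1))) \<le> smooth_lower_coeff \<theta> k"
proof -
  have "0 \<le> ln (2/\<theta>)" using \<theta> by simp
  have "exp (- (K * ln (2/\<theta>))) \<le> exp (- (real k * ln (2/\<theta>)))"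
    using \<open>real k \<le> K\<close> \<open>0 \<le> ln (2/\<theta>)\<close> by (simp add: mult_right_mono)
  also have "\<dots> = exp (real k * ln (\<theta>/2))" using \<theta> by (simp add: ln_div algebra_simps)
  also have "\<dots> = (\<theta>/2)^k" using \<theta> by (simp add: exp_of_nat_mult)
  finally have num: "exp (- (K * ln (2/\<theta>))) \<le> (\<theta>/2)^k" .
  have "(fact (Suc k) :: real) \<le> real (Suc k) ^ Suc k"
    by (metis fact_le_power of_nat_fact of_nat_le_iff of_nat_power)
  also have "\<dots> = exp (real (Suc k) * ln (real (Suc k)))"
    by (subst exp_of_nat_mult) simp
  also have "\<dots> \<le> exp ((K + 1) * ln (K + 1))"
    using \<open>real k \<le> K\<close> by (auto intro!: mult_mono)
  finally have den: "(fact (Suc k) :: real) \<le> exp ((K + 1) * ln (K + 1))" .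
  have "exp (- (ln 2 + K * ln (2/\<theta>) + (K + 1) * ln (K + 1)))
      = (1/2) * exp (- (K * ln (2/\<theta>))) / exp ((K + 1) * ln (K + 1))"
    by (simp add: exp_diff exp_minus exp_add field_simps)
  also have "\<dots> \<le> (1/2) * (\<theta>/2)^k / fact (Suc k)"
    using num den \<theta> by (intro frac_le) auto
  finally show ?thesis unfolding smooth_lower_coeff_def .
qed

section \<open>Counting smooth numbers from above\<close>

lemma ln_2_ge_half: "1/2 \<le> ln (2::real)"
  using ln_le_minus_one[of "1/2"] by (simp add: ln_div)

definition prime_powr_sum :: "real \<Rightarrow> real \<Rightarrow> real" where
  "prime_powr_sum \<eta> w = (\<Sum>p | prime p \<and> real p \<le> w. real p powr (\<eta> - 1))"

lemma finite_primes_real_le: "finite {p::nat. prime p \<and> real p \<le> w}"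
  by (rule finite_subset[OF _ finite_nat_real_le]) auto

lemma sum_inverse_primes_square_interval_le:
  assumes z: "2 \<le> z"
  shows "(\<Sum>p | prime p \<and> z < real p \<and> real p \<le> z^2. 1 / real p) \<le> 10"
proof -
  define P where "P = {p::nat. prime p \<and> z < real p \<and> real p \<le> z^2}"
  define N where "N = nat \<lfloor>z^2\<rfloor>"
  have lz: "1/2 \<le> ln z" using ln_2_ge_half z by (smt (verit) ln_le_cancel_iff)
  have N: "1 \<le> N" "real N \<le> z^2" unfolding N_def using z by (simp_all add: le_nat_iff le_floor_iff)
  have PN: "P \<subseteq> {1..N}"
    using N unfolding P_def N_def by (auto simp: le_nat_iff le_floor_iff Suc_le_eq dest: prime_gt_0_nat)
  have "(\<Sum>p\<in>P. 1 / real p) \<le> (\<Sum>p\<in>P. (1 / ln z) * (mangoldt p / real p))"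
  proof (rule sum_mono)
    fix p assume "p \<in> P"
    then have p: "prime p" "z < real p" unfolding P_def by auto
    then have "1 \<le> ln (real p) / ln z" using lz z by simp
    then have "1 / real p \<le> (ln (real p) / ln z) / real p"
      using p by (intro divide_right_mono) (auto simp: prime_gt_0_nat)
    then show "1 / real p \<le> (1 / ln z) * (mangoldt p / real p)" using p by simp
  qed
  also have "\<dots> = (1 / ln z) * (\<Sum>p\<in>P. mangoldt p / real p)" by (simp add: sum_distrib_left)
  also have "\<dots> \<le> (1 / ln z) * (\<Sum>d=1..N. mangoldt d / real d)"
    using lz PN by (intro mult_left_mono sum_mono2) (auto simp: mangoldt_nonneg)
  also have "\<dots> \<le> (1 / ln z) * (2 * ln z + 4)"
  proof (intro mult_left_mono)
    have "ln (real N) \<le> ln (z^2)" using N z by simp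
    then have "ln (real N) \<le> 2 * ln z" using z by (simp add: ln_realpow)
    then show "(\<Sum>d=1..N. mangoldt d / real d) \<le> 2 * ln z + 4" using mertens_sum_le[OF N(1)] by linarith
  qed (use lz in simp)
  also have "\<dots> \<le> 10" using lz by (simp add: field_simps)
  finally show ?thesis unfolding P_def .
qed

lemma prime_powr_sum_le_two:
  assumes "\<eta> \<le> 1" "w < 4"
  shows "prime_powr_sum \<eta> w \<le> 2"
proof -
  have sub: "{p::nat. prime p \<and> real p \<le> w} \<subseteq> {2,3}"
  proof
    fix p assume "p \<in> {p::nat. prime p \<and> real p \<le> w}"
    then have p: "prime p" "p < 4" using assms by auto
    then have "p \<noteq> 0" "p \<noteq> 1" "p \<noteq> 4" by auto
    then show "p \<in> {2,3}" using p(2) by auto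
  qed
  have "prime_powr_sum \<eta> w \<le> (\<Sum>p | prime p \<and> real p \<le> w. 1)"
    unfolding prime_powr_sum_def
  proof (rule sum_mono)
    fix p assume "p \<in> {p::nat. prime p \<and> real p \<le> w}"
    then have "1 \<le> real p" by (auto dest: prime_gt_0_nat simp: Suc_le_eq)
    then show "real p powr (\<eta> - 1) \<le> 1" using assms powr_mono[of "\<eta> - 1" 0 "real p"] by simp
  qed
  also have "\<dots> \<le> real (card {2::nat,3})" using card_mono[OF _ sub] by simp
  finally show ?thesis by simp
qed

text \<open>The primes in \<open>(\<surd>w, w]\<close> contribute at most \<open>w\<^sup>\<eta> \<Sum> 1/p \<le> 10 w\<^sup>\<eta>\<close>.\<close>
lemma prime_powr_sum_sqrt_step:
  assumes "0 < \<eta>" "4 \<le> w"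
  shows "prime_powr_sum \<eta> w \<le> prime_powr_sum \<eta> (sqrt w) + 10 * w powr \<eta>"
proof -
  define z where "z = sqrt w"
  have z: "2 \<le> z" "z^2 = w"
    unfolding z_def using assms real_sqrt_le_mono[of 4 w] by auto
  have "z * 1 \<le> z * z" using z by (intro mult_left_mono) auto
  then have "z \<le> w" using z(2) by (metis mult_1_right power2_eq_square)
  define P where "P = {p::nat. prime p \<and> z < real p \<and> real p \<le> z^2}"
  have split: "{p::nat. prime p \<and> real p \<le> w} = {p::nat. prime p \<and> real p \<le> z} \<union> P"
    unfolding P_def using z \<open>z \<le> w\<close> by auto
  have finP: "finite P" unfolding P_def by (rule finite_subset[OF _ finite_primes_real_le[of "z^2"]]) auto
  have "prime_powr_sum \<eta> w = prime_powr_sum \<eta> z + (\<Sum>p\<in>P. real p powr (\<eta> - 1))"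
    unfolding prime_powr_sum_def split
    by (rule sum.union_disjoint[OF finite_primes_real_le finP]) (auto simp: P_def)
  also have "(\<Sum>p\<in>P. real p powr (\<eta> - 1)) \<le> (\<Sum>p\<in>P. w powr \<eta> * (1 / real p))"
  proof (rule sum_mono)
    fix p assume "p \<in> P"
    then have p: "0 < real p" "real p \<le> w" unfolding P_def using z by (auto simp: prime_gt_0_nat)
    have "real p powr (\<eta> - 1) = real p powr \<eta> / real p" using p by (simp add: powr_diff)
    also have "\<dots> \<le> w powr \<eta> / real p" using p assms by (intro divide_right_mono powr_mono2) auto
    finally show "real p powr (\<eta> - 1) \<le> w powr \<eta> * (1 / real p)" by simp
  qed
  also have "\<dots> \<le> w powr \<eta> * 10"
    using sum_inverse_primes_square_interval_le[OF z(1)] unfolding P_def sum_distrib_left[symmetric]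
    by (intro mult_left_mono) auto
  finally show ?thesis unfolding z_def by simp
qed

lemma prime_powr_sum_le:
  assumes "0 < \<eta>" "\<eta> \<le> 1" "w \<le> 2^(2^N)"
  shows "prime_powr_sum \<eta> w \<le> 10 * w powr \<eta> + 10 * real N * w powr (\<eta>/2) + 2"
  using assms(3)
proof (induction N arbitrary: w)
  case 0
  then have "prime_powr_sum \<eta> w \<le> 2" using assms by (intro prime_powr_sum_le_two) auto
  then show ?case by (simp add: add_increasing)
next
  case (Suc N)
  show ?case
  proof (cases "w < 4")
    case True
    then have "prime_powr_sum \<eta> w \<le> 2" using assms by (intro prime_powr_sum_le_two) auto
    then show ?thesis by (simp add: add_increasing)
  next
    case False
    have "sqrt w \<le> sqrt ((2^(2^N))^2)"
      using Suc.prems by (intro real_sqrt_le_mono) (simp add: power_mult[symmetric] mult.commute)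
    then have "prime_powr_sum \<eta> (sqrt w) \<le> 10 * sqrt w powr \<eta> + 10 * real N * sqrt w powr (\<eta>/2) + 2"
      by (intro Suc.IH) simp
    moreover have "sqrt w powr \<eta> = w powr (\<eta>/2)" "sqrt w powr (\<eta>/2) \<le> w powr (\<eta>/2)"
      using False assms by (simp_all add: powr_half_sqrt[symmetric] powr_powr)
    ultimately have "prime_powr_sum \<eta> (sqrt w) \<le> 10 * real (Suc N) * w powr (\<eta>/2) + 2"
      using mult_left_mono[of "sqrt w powr (\<eta>/2)" "w powr (\<eta>/2)" "10 * real N"] by (simp add: algebra_simps)
    then show ?thesis using prime_powr_sum_sqrt_step[of \<eta> w] False assms by simp
  qed
qed

lemma sum_powers_le_exp:
  fixes z :: real
  assumes "0 < z" "z \<le> 3/4" "finite S"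
  shows "(\<Sum>k\<in>S. z ^ k) \<le> exp (4 * z)"
proof -
  have "(\<Sum>k\<in>S. z ^ k) \<le> 1 / (1 - z)"
    using assms by (intro less_imp_le geometric_sum_less) auto
  moreover have "1 / (1 - z) \<le> exp (4 * z)"
  proof -
    have "z * (4 * z) \<le> z * 3" using assms by (intro mult_left_mono) auto
    then have "1 \<le> (1 + 4 * z) * (1 - z)" by (simp add: algebra_simps)
    also have "\<dots> \<le> exp (4 * z) * (1 - z)"
      using assms by (intro mult_right_mono) (auto simp: exp_ge_add_one_self)
    finally show ?thesis using assms by (subst pos_divide_le_eq) auto
  qed
  ultimately show ?thesis by linarith
qed

lemma prime_powr_le_three_quarters:
  assumes "prime p" "\<eta> \<le> 1/2"
  shows "real p powr (\<eta> - 1) \<le> 3/4"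
proof -
  have p2: "2 \<le> real p" using assms by (simp add: prime_ge_2_nat)
  have "real p powr (\<eta> - 1) \<le> real p powr (-(1/2))"
    using p2 assms by (intro powr_mono) auto
  also have "\<dots> = 1 / sqrt (real p)" using p2 by (simp add: powr_minus_divide powr_half_sqrt)
  also have "\<dots> \<le> 1 / sqrt 2" using p2 by (intro frac_le) auto
  also have "\<dots> \<le> 1 / (4/3)"
    by (intro frac_le real_le_rsqrt) (auto simp: power2_eq_square)
  finally show ?thesis by simp
qed

lemma multiplicity_le_self:
  assumes "prime p" "0 < n"
  shows "multiplicity p n \<le> (n::nat)"
proof -
  have "multiplicity p n < 2 ^ multiplicity p n" by (rule less_exp)
  also have "(2::nat) ^ multiplicity p n \<le> p ^ multiplicity p n"
    using assms by (intro power_mono) (auto simp: prime_ge_2_nat)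
  also have "\<dots> \<le> n" using assms by (intro dvd_imp_le multiplicity_dvd) auto
  finally show ?thesis by simp
qed

lemma power_powr_commute:
  fixes x :: real
  assumes "0 < x"
  shows "(x ^ m) powr a = (x powr a) ^ m"
proof -
  have "(x ^ m) powr a = (x powr real m) powr a" using assms by (simp add: powr_realpow)
  also have "\<dots> = x powr (real m * a)" by (simp add: powr_powr)
  also have "\<dots> = (x powr a) ^ m" using assms by (simp add: powr_power)
  finally show ?thesis .
qed

lemma powr_eq_prod_multiplicity:
  assumes "0 < n" "finite P" "\<forall>p\<in>P. prime p" "prime_factors n \<subseteq> P"
  shows "real n powr s = (\<Prod>p\<in>P. (real p powr s) ^ multiplicity p n)"
proof -
  have "n = (\<Prod>p\<in>prime_factors n. p ^ multiplicity p n)"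
    using assms(1) by (rule prime_factorization_nat)
  also have "\<dots> = (\<Prod>p\<in>P. p ^ multiplicity p n)"
    using assms by (intro prod.mono_neutral_left) (auto simp: in_prime_factors_iff not_dvd_imp_multiplicity_0)
  finally have "real n = real (\<Prod>p\<in>P. p ^ multiplicity p n)" by (rule arg_cong)
  also have "\<dots> = (\<Prod>p\<in>P. real p ^ multiplicity p n)" by (simp only: of_nat_prod of_nat_power)
  finally have "real n powr s = (\<Prod>p\<in>P. (real p ^ multiplicity p n) powr s)"
    by (simp add: prod_powr_distrib)
  also have "\<dots> = (\<Prod>p\<in>P. (real p powr s) ^ multiplicity p n)"
    using assms by (intro prod.cong refl power_powr_commute) (simp add: prime_gt_0_nat)
  finally show ?thesis .
qed

text \<open>Rankin's trick: each \<open>n \<le> x\<close> is counted with the weight \<open>(x/n)\<^sup>1\<^sup>-\<^sup>\<eta> \<ge> 1\<close>.\<close>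
lemma card_le_powr_sum:
  assumes "\<And>n. n \<in> S \<Longrightarrow> 0 < n \<and> real n \<le> x" "\<eta> \<le> 1"
  shows "real (card S) \<le> x powr (1 - \<eta>) * (\<Sum>n\<in>S. real n powr (\<eta> - 1))"
proof -
  have "real (card S) = (\<Sum>n\<in>S. 1)" by simp
  also have "\<dots> \<le> (\<Sum>n\<in>S. x powr (1 - \<eta>) * real n powr (\<eta> - 1))"
  proof (rule sum_mono)
    fix n assume "n \<in> S"
    then have n: "0 < real n" "real n \<le> x" using assms by auto
    have "x powr (1 - \<eta>) * real n powr (\<eta> - 1) = (x / real n) powr (1 - \<eta>)"
      using n by (simp add: powr_divide powr_minus_divide[of "real n" "1 - \<eta>", simplified])
    also have "1 \<le> \<dots>" using n assms by (intro ge_one_powr_ge_zero) (auto simp: field_simps)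
    finally show "1 \<le> x powr (1 - \<eta>) * real n powr (\<eta> - 1)" .
  qed
  also have "\<dots> = x powr (1 - \<eta>) * (\<Sum>n\<in>S. real n powr (\<eta> - 1))" by (simp add: sum_distrib_left)
  finally show ?thesis .
qed

lemma inj_on_restrict_multiplicity:
  assumes "\<And>n. n \<in> S \<Longrightarrow> 0 < n \<and> prime_factors n \<subseteq> P"
  shows "inj_on (\<lambda>n::nat. restrict (\<lambda>p. multiplicity p n) P) S"
proof (rule inj_onI)
  fix n m assume nm: "n \<in> S" "m \<in> S" "restrict (\<lambda>p. multiplicity p n) P = restrict (\<lambda>p. multiplicity p m) P"
  show "n = m"
  proof (rule multiplicity_eq_nat)
    fix p :: nat assume "prime p"
    show "multiplicity p n = multiplicity p m"
    proof (cases "p \<in> P")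
      case True
      then show ?thesis using fun_cong[OF nm(3), of p] by simp
    next
      case False
      then have "p \<notin> prime_factors n" "p \<notin> prime_factors m" using assms nm by auto
      then have "\<not> p dvd n" "\<not> p dvd m" using assms nm \<open>prime p\<close> by (auto simp: in_prime_factors_iff)
      then show ?thesis by (simp add: not_dvd_imp_multiplicity_0)
    qed
  qed (use assms nm in auto)
qed

text \<open>The Euler product bound: the exponent vectors of the \<open>y\<close>-smooth \<open>n \<le> x\<close> are distinct,
  so the sum is dominated by \<open>\<Prod>\<^sub>p\<^sub>\<le>\<^sub>y \<Sum>\<^sub>k (p\<^sup>\<eta>\<^sup>-\<^sup>1)\<^sup>k\<close>.\<close>
lemma sum_smooth_powr_le_exp:
  assumes \<eta>: "0 < \<eta>" "\<eta> \<le> 1/2"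
  shows "(\<Sum>n | 0 < n \<and> real n \<le> x \<and> smooth_nat y n. real n powr (\<eta> - 1)) \<le> exp (4 * prime_powr_sum \<eta> y)"
proof -
  define SM where "SM = {n::nat. 0 < n \<and> real n \<le> x \<and> smooth_nat y n}"
  define P where "P = {p::nat. prime p \<and> real p \<le> y}"
  define K where "K = nat \<lfloor>x\<rfloor>"
  define z where "z p = real p powr (\<eta> - 1)" for p :: nat
  define \<phi> where "\<phi> n = restrict (\<lambda>p. multiplicity p n) P" for n :: nat
  have finP: "finite P" unfolding P_def by (rule finite_primes_real_le)
  have SM: "0 < n" "prime_factors n \<subseteq> P" "n \<le> K" if "n \<in> SM" for n
    using that unfolding SM_def P_def smooth_nat_def K_def
    by (auto simp: in_prime_factors_iff le_nat_iff le_floor_iff)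
  have powr_eq: "real n powr (\<eta> - 1) = (\<Prod>p\<in>P. z p ^ \<phi> n p)" if "n \<in> SM" for n
    unfolding z_def \<phi>_def using SM[OF that] finP
    by (subst powr_eq_prod_multiplicity[of n P]) (auto simp: P_def)
  have inj: "inj_on \<phi> SM" unfolding \<phi>_def using SM by (intro inj_on_restrict_multiplicity) auto
  have img: "\<phi> ` SM \<subseteq> PiE P (\<lambda>_. {..K})"
  proof
    fix g assume "g \<in> \<phi> ` SM"
    then obtain n where "n \<in> SM" "g = \<phi> n" by auto
    then show "g \<in> PiE P (\<lambda>_. {..K})"
      using SM[OF \<open>n \<in> SM\<close>] multiplicity_le_self[of _ n] unfolding \<phi>_def P_def
      by (auto simp: restrict_PiE_iff intro: order.trans)
  qed
  have z: "0 < z p" "z p \<le> 3/4" if "p \<in> P" for p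
    using that \<eta> prime_powr_le_three_quarters unfolding z_def P_def by (auto simp: prime_gt_0_nat)
  have "(\<Sum>n\<in>SM. real n powr (\<eta> - 1)) = (\<Sum>n\<in>SM. \<Prod>p\<in>P. z p ^ \<phi> n p)"
    using powr_eq by (rule sum.cong[OF refl])
  also have "\<dots> = (\<Sum>g\<in>\<phi> ` SM. \<Prod>p\<in>P. z p ^ g p)"
    using inj by (simp add: sum.reindex)
  also have "\<dots> \<le> (\<Sum>g\<in>PiE P (\<lambda>_. {..K}). \<Prod>p\<in>P. z p ^ g p)"
    using img z finP by (intro sum_mono2 finite_PiE prod_nonneg) (auto intro: less_imp_le)
  also have "\<dots> = (\<Prod>p\<in>P. \<Sum>k\<le>K. z p ^ k)"
    using finP by (subst prod_sum_PiE) auto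
  also have "\<dots> \<le> (\<Prod>p\<in>P. exp (4 * z p))"
  proof (rule prod_mono)
    fix p assume "p \<in> P"
    then have "0 \<le> z p" using z(1) less_imp_le by blast
    then show "0 \<le> (\<Sum>k\<le>K. z p ^ k) \<and> (\<Sum>k\<le>K. z p ^ k) \<le> exp (4 * z p)"
      using z \<open>p \<in> P\<close> by (auto intro!: sum_nonneg sum_powers_le_exp)
  qed
  also have "\<dots> = exp (4 * prime_powr_sum \<eta> y)"
    unfolding prime_powr_sum_def P_def[symmetric] z_def using finP by (simp add: exp_sum sum_distrib_left)
  finally show ?thesis unfolding SM_def .
qed

lemma smooth_count_le:
  assumes "y \<le> 2^(2^N)" "0 < \<eta>" "\<eta> \<le> 1/2" "0 \<le> L"
  shows "real (smooth_count y L T)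
           \<le> T powr (1 - \<eta>) * exp (4 * (10 * y powr \<eta> + 10 * real N * y powr (\<eta>/2) + 2))"
proof -
  define S where "S = {n::nat. 0 < n \<and> real n \<le> T \<and> smooth_nat y n}"
  have S: "0 < n \<and> real n \<le> T" if "n \<in> S" for n
    using that unfolding S_def by simp
  have "{n::nat. L < real n \<and> real n \<le> T \<and> smooth_nat y n} \<subseteq> S"
    using \<open>0 \<le> L\<close> unfolding S_def by (auto intro: Nat.gr0I)
  moreover have "finite S" unfolding S_def by (rule finite_subset[OF _ finite_nat_real_le]) auto
  ultimately have "smooth_count y L T \<le> card S"
    unfolding smooth_count_def by (rule card_mono[rotated])
  then have "real (smooth_count y L T) \<le> real (card S)" by simp
  also have "\<dots> \<le> T powr (1 - \<eta>) * (\<Sum>n\<in>S. real n powr (\<eta> - 1))"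
    by (rule card_le_powr_sum) (use S assms in auto)
  also have "\<dots> \<le> T powr (1 - \<eta>) * exp (4 * prime_powr_sum \<eta> y)"
    unfolding S_def using sum_smooth_powr_le_exp[of \<eta> T y] assms by (intro mult_left_mono) auto
  also have "\<dots> \<le> T powr (1 - \<eta>) * exp (4 * (10 * y powr \<eta> + 10 * real N * y powr (\<eta>/2) + 2))"
  proof (intro mult_left_mono)
    have "prime_powr_sum \<eta> y \<le> 10 * y powr \<eta> + 10 * real N * y powr (\<eta>/2) + 2"
      using assms by (intro prime_powr_sum_le) auto
    then show "exp (4 * prime_powr_sum \<eta> y) \<le> exp (4 * (10 * y powr \<eta> + 10 * real N * y powr (\<eta>/2) + 2))"
      by simp
  qed simp
  finally show ?thesis .
qed

section \<open>The probability as a density of smooth numbers\<close>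

lemma smooth_uminus_int_iff: "smooth B (- int n) \<longleftrightarrow> smooth_nat B n"
proof
  assume h: "smooth B (- int n)"
  show "smooth_nat B n" unfolding smooth_nat_def
  proof (intro allI impI)
    fix q :: nat assume "prime q \<and> q dvd n"
    then have "prime (int q)" "int q dvd - int n" by auto
    then have "real_of_int (int q) \<le> B" using h unfolding smooth_def by blast
    then show "real q \<le> B" by simp
  qed
next
  assume h: "smooth_nat B n"
  show "smooth B (- int n)" unfolding smooth_def
  proof (intro allI impI)
    fix p :: int assume p: "prime p \<and> p dvd - int n"
    then have "0 \<le> p" "prime (nat p)" using prime_int_nat_transfer by blast+
    moreover have "int (nat p) dvd int n" using p \<open>0 \<le> p\<close> by simp
    ultimately have "real (nat p) \<le> B" using h unfolding smooth_nat_def int_dvd_int_iff by blast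
    then show "real_of_int p \<le> B" using \<open>0 \<le> p\<close> by simp
  qed
qed

lemma shifted_multiple_in_window_iff:
  fixes a b m m1 m2 :: int
  assumes "0 < b" "0 \<le> a" "a < b"
  shows "b * (m1 - 1) < b * m - a \<and> b * m - a \<le> b * m2 \<longleftrightarrow> m1 \<le> m \<and> m \<le> m2"
proof
  assume "b * (m1 - 1) < b * m - a \<and> b * m - a \<le> b * m2"
  then have "b * (m1 - 1) < b * m" "b * m < b * (m2 + 1)" using assms by (simp_all add: algebra_simps)
  then show "m1 \<le> m \<and> m \<le> m2" using assms by (simp add: mult_less_cancel_left_pos)
next
  assume "m1 \<le> m \<and> m \<le> m2"
  then have "b * m1 \<le> b * m" "b * m \<le> b * m2" using assms by simp_all
  then show "b * (m1 - 1) < b * m - a \<and> b * m - a \<le> b * m2"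
    using assms by (simp only: right_diff_distrib mult_1_right) linarith
qed

text \<open>The inverse map is division with remainder of \<open>-z\<close> by \<open>b\<close>.\<close>
lemma bij_betw_shifted_multiple:
  fixes b m1 m2 :: int
  assumes "0 < b"
  shows "bij_betw (\<lambda>(a, m). b * m - a) ({0..<b} \<times> {m1..m2}) {b * (m1 - 1)<..b * m2}"
proof -
  define f :: "int \<times> int \<Rightarrow> int" where "f = (\<lambda>(a, m). b * m - a)"
  define g where "g z = ((- z) mod b, - ((- z) div b))" for z
  have "b \<noteq> 0" using assms by simp
  have g_f: "g (f (a, m)) = (a, m)" if "0 \<le> a" "a < b" for a m
  proof -
    have "- f (a, m) = a + (- m) * b" unfolding f_def by simp
    moreover have "(a + (- m) * b) mod b = a" unfolding mod_mult_self1 using that by simp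
    moreover have "(a + (- m) * b) div b = - m" unfolding div_mult_self1[OF \<open>b \<noteq> 0\<close>] using that by simp
    ultimately show ?thesis unfolding g_def by simp
  qed
  have f_g: "f (g z) = z" for z
  proof -
    have "b * ((- z) div b) + (- z) mod b = - z" by (rule mult_div_mod_eq)
    then show ?thesis unfolding f_def g_def prod.case mult_minus_right by linarith
  qed
  have g_bounds: "0 \<le> fst (g z)" "fst (g z) < b" for z
    unfolding g_def using assms by simp_all
  have "bij_betw f ({0..<b} \<times> {m1..m2}) {b * (m1 - 1)<..b * m2}"
  proof (rule bij_betw_byWitness[where f' = g])
    show "\<forall>x\<in>{0..<b} \<times> {m1..m2}. g (f x) = x" using g_f by auto
    show "\<forall>z\<in>{b * (m1 - 1)<..b * m2}. f (g z) = z" using f_g by auto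
    show "f ` ({0..<b} \<times> {m1..m2}) \<subseteq> {b * (m1 - 1)<..b * m2}"
      using shifted_multiple_in_window_iff[OF assms] by (auto simp: f_def)
    show "g ` {b * (m1 - 1)<..b * m2} \<subseteq> {0..<b} \<times> {m1..m2}"
    proof (rule image_subsetI)
      fix z assume z: "z \<in> {b * (m1 - 1)<..b * m2}"
      obtain a m where am: "g z = (a, m)" by fastforce
      then have "z = b * m - a" "0 \<le> a" "a < b"
        using f_g[of z] g_bounds[of z] unfolding f_def by auto
      then show "g z \<in> {0..<b} \<times> {m1..m2}"
        using z am shifted_multiple_in_window_iff[OF assms, of a m1 m m2] by auto
    qed
  qed
  then show ?thesis unfolding f_def .
qed

lemma card_smooth_pairs_eq_smooth_count:
  fixes b m1 m2 :: int
  assumes "0 < b" "1 \<le> m1"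
  shows "card {(a, m). a \<in> {0..<b} \<and> m \<in> {m1..m2} \<and> smooth B (a - b * m)}
       = smooth_count B (real_of_int (b * (m1 - 1))) (real_of_int (b * m2))"
proof -
  define f :: "int \<times> int \<Rightarrow> int" where "f = (\<lambda>(a, m). b * m - a)"
  define A where "A = {x \<in> {0..<b} \<times> {m1..m2}. smooth B (- f x)}"
  define Z where "Z = {z \<in> {b * (m1 - 1)<..b * m2}. smooth B (- z)}"
  define N where "N = {n::nat. real_of_int (b * (m1 - 1)) < real n \<and> real n \<le> real_of_int (b * m2) \<and> smooth_nat B n}"
  have bij: "inj_on f ({0..<b} \<times> {m1..m2})" "f ` ({0..<b} \<times> {m1..m2}) = {b * (m1 - 1)<..b * m2}"
    using bij_betw_shifted_multiple[OF assms(1), of m1 m2] unfolding f_def bij_betw_def by auto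
  have "f ` A = Z"
  proof (intro equalityI subsetI)
    fix z assume "z \<in> f ` A"
    then show "z \<in> Z" using bij(2) unfolding A_def Z_def by auto
  next
    fix z assume z: "z \<in> Z"
    then have "z \<in> f ` ({0..<b} \<times> {m1..m2})" unfolding Z_def bij(2) by simp
    then obtain x where "x \<in> {0..<b} \<times> {m1..m2}" "z = f x" by blast
    then show "z \<in> f ` A" using z unfolding A_def Z_def by auto
  qed
  moreover have "int ` N = Z"
  proof (intro equalityI subsetI)
    fix z assume "z \<in> int ` N"
    then obtain n where n: "n \<in> N" "z = int n" by blast
    then have "real_of_int (b * (m1 - 1)) < real_of_int (int n)" "real_of_int (int n) \<le> real_of_int (b * m2)"
      unfolding N_def by simp_all
    then have "b * (m1 - 1) < int n" "int n \<le> b * m2" by (simp_all only: of_int_less_iff of_int_le_iff)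
    then show "z \<in> Z" using n smooth_uminus_int_iff[of B n] unfolding N_def Z_def by simp
  next
    fix z assume "z \<in> Z"
    then have z: "b * (m1 - 1) < z" "z \<le> b * m2" "smooth B (- z)" unfolding Z_def by simp_all
    have "0 \<le> b * (m1 - 1)" using assms by simp
    then have "0 \<le> z" using z by simp
    have "real_of_int (b * (m1 - 1)) < real_of_int z" "real_of_int z \<le> real_of_int (b * m2)"
      using z by (simp_all only: of_int_less_iff of_int_le_iff)
    then have "nat z \<in> N"
      using z(3) \<open>0 \<le> z\<close> smooth_uminus_int_iff[of B "nat z"] unfolding N_def by simp
    moreover have "z = int (nat z)" using \<open>0 \<le> z\<close> by simp
    ultimately show "z \<in> int ` N" by (intro image_eqI)
  qed
  moreover have "{(a, m). a \<in> {0..<b} \<and> m \<in> {m1..m2} \<and> smooth B (a - b * m)} = A"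
    unfolding A_def f_def by auto
  moreover have "inj_on f A" using bij(1) unfolding A_def by (rule inj_on_subset) blast
  ultimately show ?thesis
    unfolding smooth_count_def N_def[symmetric] by (metis card_image inj_on_of_nat)
qed

lemma smooth_prob_eq_density:
  fixes b m1 m2 :: int
  assumes "0 < b" "1 \<le> m1" "m1 \<le> m2" "m_range n \<delta> = {m1..m2}"
  shows "smooth_prob n \<delta> \<beta> b
    = real (smooth_count (Lfun (real n) (1/3) \<beta>) (real_of_int (b * (m1 - 1))) (real_of_int (b * m2)))
      / (real_of_int b * real_of_int (m2 - m1 + 1))"
proof -
  have "real (card {0..<b}) = real_of_int b" "real (card {m1..m2}) = real_of_int (m2 - m1 + 1)"
    using assms by simp_all
  then show ?thesis
    unfolding smooth_prob_def assms(4) card_smooth_pairs_eq_smooth_count[OF assms(1,2)] by simp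
qed

lemma m_range_eq_Icc:
  "m_range n \<delta> = {\<lceil>2 powr (-1 / (\<delta> * (ln (real n) / ln (ln (real n))) powr (1/3))) * Lfun (real n) (2/3) (1/\<delta>)\<rceil>
                   ..\<lfloor>Lfun (real n) (2/3) (1/\<delta>)\<rfloor>}"
  unfolding m_range_def Let_def by (auto simp: ceiling_le_iff le_floor_iff)

lemma one_minus_two_powr_ge:
  fixes D :: real
  assumes "1 \<le> D"
  shows "1 / (4 * D) \<le> 1 - 2 powr (-1/D)"
proof -
  define s where "s = ln 2 / D"
  have s: "0 < s" "s \<le> 1" "1 / (4 * D) \<le> s / 2"
    using assms ln_2_less_1 ln_2_ge_half unfolding s_def by (auto simp: field_simps)
  have "2 powr (-1/D) = inverse (exp s)" unfolding s_def powr_def by (simp add: exp_minus)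
  also have "\<dots> \<le> 1 / (1 + s)"
    using s exp_ge_add_one_self[of s] by (simp add: inverse_eq_divide frac_le)
  finally have "1 - 1 / (1 + s) \<le> 1 - 2 powr (-1/D)" by simp
  moreover have "s / 2 \<le> 1 - 1 / (1 + s)" using s by (simp add: field_simps)
  ultimately show ?thesis using s by linarith
qed

lemma integer_window_bounds:
  fixes D hi :: real
  assumes "1 \<le> D" "16 * D \<le> hi"
  defines "m1 \<equiv> \<lceil>2 powr (-1/D) * hi\<rceil>" and "m2 \<equiv> \<lfloor>hi\<rfloor>"
  shows "1 \<le> m1" "2 \<le> m2 - m1 + 1" "real_of_int m2 \<le> 8 * D * real_of_int (m2 - m1 + 1)"
    "hi / 2 \<le> real_of_int m2" "real_of_int m2 \<le> hi"
proof -
  have "0 < hi" using assms by simp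
  then show "1 \<le> m1" unfolding m1_def by simp
  have m1: "real_of_int m1 \<le> 2 powr (-1/D) * hi + 1" unfolding m1_def by (rule of_int_ceiling_le_add_one)
  have m2: "hi - 1 < real_of_int m2" "real_of_int m2 \<le> hi" unfolding m2_def by linarith+
  then show "real_of_int m2 \<le> hi" by simp
  have "hi / (4 * D) \<le> hi - 2 powr (-1/D) * hi"
    using mult_left_mono[OF one_minus_two_powr_ge[OF assms(1)], of hi] \<open>0 < hi\<close>
    by (simp add: algebra_simps)
  moreover have "2 \<le> hi / (8 * D)" "hi / (4 * D) = 2 * (hi / (8 * D))"
    using assms by (simp_all add: field_simps)
  moreover have "real_of_int (m2 - m1 + 1) = real_of_int m2 - real_of_int m1 + 1" by simp
  ultimately have W: "hi / (8 * D) \<le> real_of_int (m2 - m1 + 1)" using m1 m2 by linarith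
  then show "2 \<le> m2 - m1 + 1" using \<open>2 \<le> hi / (8 * D)\<close> by linarith
  have "hi = 8 * D * (hi / (8 * D))" using assms by simp
  also have "\<dots> \<le> 8 * D * real_of_int (m2 - m1 + 1)" using W assms by (intro mult_left_mono) auto
  finally show "real_of_int m2 \<le> 8 * D * real_of_int (m2 - m1 + 1)" using m2 by linarith
  show "hi / 2 \<le> real_of_int m2" using m2 assms by linarith
qed

lemma smooth_window_density_ge:
  fixes b m1 m2 :: int
  assumes y: "1 < y" and \<theta>: "0 < \<theta>" "\<theta> \<le> 1/4" "12 \<le> \<theta> * ln y"
    and "0 < b" "1 \<le> m1" "2 \<le> m2 - m1 + 1"
    and window: "2 * real_of_int m2 \<le> y powr \<theta> * real_of_int (m2 - m1 + 1)"
    and k: "real_of_int (b * m2) \<le> y powr (1 + real k * (1 - 2*\<theta>))"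
  shows "smooth_lower_coeff \<theta> k
    \<le> real (smooth_count y (real_of_int (b * (m1 - 1))) (real_of_int (b * m2)))
      / (real_of_int b * real_of_int (m2 - m1 + 1))"
proof -
  define T where "T = real_of_int (b * m2)"
  define W where "W = real_of_int b * real_of_int (m2 - m1 + 1)"
  define \<rho> where "\<rho> = 1 - W / T"
  have b: "1 \<le> real_of_int b" using \<open>0 < b\<close> by simp
  have W: "2 \<le> W" "W \<le> T"
    using assms mult_mono[OF b, of 2 "real_of_int (m2 - m1 + 1)"] unfolding W_def T_def by simp_all
  then have "0 < T" by simp
  have \<rho>: "0 \<le> \<rho>" "\<rho> < 1" "1 - \<rho> = W / T"
    using W \<open>0 < T\<close> unfolding \<rho>_def by simp_all
  have "\<rho> * T = T - W" unfolding \<rho>_def using \<open>0 < T\<close> by (simp add: algebra_simps)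
  also have "\<dots> = real_of_int (b * (m1 - 1))" unfolding T_def W_def by (simp add: algebra_simps)
  finally have \<rho>T: "\<rho> * T = real_of_int (b * (m1 - 1))" .
  have two_over: "2 / (1 - \<rho>) = 2 * T / W" using W \<open>0 < T\<close> unfolding \<rho>(3) by simp
  have "2 * T \<le> y powr \<theta> * W"
    using mult_left_mono[OF window, of "real_of_int b"] \<open>0 < b\<close> unfolding T_def W_def by (simp add: ac_simps)
  then have "2 / (1 - \<rho>) \<le> y powr \<theta>" "2 / (1 - \<rho>) \<le> T"
    using W unfolding two_over by (simp_all add: pos_divide_le_eq mult.commute mult_left_mono)
  then have "(1 - \<rho>) * T * smooth_lower_coeff \<theta> k \<le> real (smooth_count y (\<rho> * T) T)"
    using y \<theta> \<rho> k unfolding T_def by (intro smooth_count_ge) auto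
  moreover have "(1 - \<rho>) * T = W" using \<open>0 < T\<close> unfolding \<rho>(3) by simp
  ultimately have "W * smooth_lower_coeff \<theta> k \<le> real (smooth_count y (real_of_int (b * (m1 - 1))) T)"
    unfolding \<rho>T by simp
  then have "smooth_lower_coeff \<theta> k \<le> real (smooth_count y (real_of_int (b * (m1 - 1))) T) / W"
    using W by (simp add: pos_le_divide_eq mult.commute)
  then show ?thesis unfolding T_def W_def .
qed

lemma smooth_window_density_le:
  fixes b m1 m2 :: int
  assumes "y \<le> 2^(2^N)" "0 < \<eta>" "\<eta> \<le> 1/2" "0 < b" "1 \<le> m1" "m1 \<le> m2"
  shows "real (smooth_count y (real_of_int (b * (m1 - 1))) (real_of_int (b * m2)))
           / (real_of_int b * real_of_int (m2 - m1 + 1))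
    \<le> real_of_int m2 / real_of_int (m2 - m1 + 1)
       * exp (4 * (10 * y powr \<eta> + 10 * real N * y powr (\<eta>/2) + 2)) / real_of_int (b * m2) powr \<eta>"
proof -
  define T where "T = real_of_int (b * m2)"
  define X where "X = exp (4 * (10 * y powr \<eta> + 10 * real N * y powr (\<eta>/2) + 2))"
  have "0 < T" "0 < real_of_int (m2 - m1 + 1)" using assms unfolding T_def by simp_all
  have "real (smooth_count y (real_of_int (b * (m1 - 1))) T) \<le> T powr (1 - \<eta>) * X"
    unfolding X_def using assms by (intro smooth_count_le) auto
  also have "\<dots> = T * X / T powr \<eta>" using \<open>0 < T\<close> by (simp add: powr_diff)
  finally have "real (smooth_count y (real_of_int (b * (m1 - 1))) T) / (real_of_int b * real_of_int (m2 - m1 + 1))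
      \<le> T * X / T powr \<eta> / (real_of_int b * real_of_int (m2 - m1 + 1))"
    using assms by (intro divide_right_mono) auto
  also have "\<dots> = T / (real_of_int b * real_of_int (m2 - m1 + 1)) * X / T powr \<eta>"
    by (simp add: divide_inverse ac_simps)
  also have "T / (real_of_int b * real_of_int (m2 - m1 + 1)) = real_of_int m2 / real_of_int (m2 - m1 + 1)"
    unfolding T_def using assms by simp
  finally show ?thesis unfolding T_def X_def .
qed

definition Lexp :: "real \<Rightarrow> real \<Rightarrow> real" where
  "Lexp \<alpha> x = x powr \<alpha> * ln x powr (1 - \<alpha>)"

lemma Lfun_eq_exp_Lexp: "Lfun z \<alpha> c = exp (c * Lexp \<alpha> (ln z))"
  unfolding Lfun_def Lexp_def by (simp add: mult.assoc)

lemma exists_nat_powr_ge: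
  assumes "0 < T" "1 < y" "0 < \<alpha>" "ln T / ln y \<le> M" "0 \<le> M"
  obtains k :: nat where "T \<le> y powr (1 + real k * \<alpha>)" "real k \<le> M / \<alpha> + 1"
proof
  define k where "k = nat \<lceil>(ln T / ln y - 1) / \<alpha>\<rceil>"
  have "(ln T / ln y - 1) / \<alpha> \<le> M / \<alpha>" "0 \<le> M / \<alpha>" using assms by (simp_all add: divide_right_mono)
  then show "real k \<le> M / \<alpha> + 1" unfolding k_def by linarith
  have "(ln T / ln y - 1) / \<alpha> \<le> real k" unfolding k_def by linarith
  then have "ln T \<le> (1 + real k * \<alpha>) * ln y" using assms by (simp add: field_simps)
  then have "exp (ln T) \<le> exp ((1 + real k * \<alpha>) * ln y)" by simp
  then show "T \<le> y powr (1 + real k * \<alpha>)" using assms by (simp add: powr_def)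
qed

lemma exp_powr_ln_div:
  assumes "0 < Y" "0 < u"
  shows "exp Y powr (ln u / Y) = u" "exp Y powr (ln u / Y / 2) = sqrt u"
  using assms by (simp_all add: powr_def powr_half_sqrt[symmetric])

lemma nat_ceiling_log_le:
  assumes "1 \<le> z"
  shows "real (nat \<lceil>log 2 z\<rceil>) \<le> log 2 z + 1"
proof -
  have "0 \<le> log 2 z" using assms by simp
  then show ?thesis using of_int_ceiling_le_add_one[of "log 2 z"] by linarith
qed

lemma exp_le_two_power_two_power:
  assumes "ln 2 \<le> Y"
  shows "exp Y \<le> 2 ^ 2 ^ nat \<lceil>log 2 (Y / ln 2)\<rceil>"
proof -
  define N where "N = nat \<lceil>log 2 (Y / ln 2)\<rceil>"
  have "1 \<le> Y / ln 2" using assms by simp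
  then have "Y / ln 2 = 2 powr log 2 (Y / ln 2)" by (intro powr_log_cancel[symmetric]) linarith+
  also have "\<dots> \<le> 2 powr real N" unfolding N_def by (intro powr_mono) linarith+
  finally have "Y / ln 2 \<le> 2 ^ N" by (simp add: powr_realpow)
  have "exp Y = 2 powr (Y / ln 2)" by (simp add: powr_def)
  also have "\<dots> \<le> 2 powr real (2 ^ N)" using \<open>Y / ln 2 \<le> 2 ^ N\<close> by (intro powr_mono) auto
  also have "\<dots> = 2 ^ 2 ^ N" by (rule powr_realpow) simp
  finally show ?thesis unfolding N_def .
qed

text \<open>With \<open>x = log n\<close> we have \<open>L\<^sub>n(\<alpha>, c) = exp (c \<cdot> Lexp \<alpha> x)\<close>; the smoothness bound is \<open>exp (\<beta> E)\<close>,
  \<open>m\<close> ranges up to \<open>exp H\<close> and \<open>D\<close> is the paper's \<open>d\<close>.\<close>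
lemma smooth_prob_eq_at:
  fixes n :: nat and b :: int and \<delta> \<beta> :: real
  defines "x \<equiv> ln (real n)"
  defines "E \<equiv> Lexp (1/3) x" and "H \<equiv> 1/\<delta> * Lexp (2/3) x" and "D \<equiv> \<delta> * (x / ln x) powr (1/3)"
  defines "m1 \<equiv> \<lceil>2 powr (-1/D) * exp H\<rceil>" and "m2 \<equiv> \<lfloor>exp H\<rfloor>"
  assumes "1 \<le> D" "16 * D \<le> exp H" "0 < b"
  shows "smooth_prob n \<delta> \<beta> b = real (smooth_count (exp (\<beta> * E)) (real_of_int (b * (m1 - 1))) (real_of_int (b * m2)))
      / (real_of_int b * real_of_int (m2 - m1 + 1))"
proof -
  note window = integer_window_bounds[OF assms(7,8), folded m1_def m2_def]
  have "m_range n \<delta> = {m1..m2}"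
    unfolding m_range_eq_Icc m1_def m2_def D_def H_def x_def Lfun_eq_exp_Lexp by simp
  then show ?thesis
    using smooth_prob_eq_density[of b m1 m2 n \<delta> \<beta>] window assms(9)
    unfolding E_def x_def Lfun_eq_exp_Lexp by simp
qed

lemma smooth_prob_ge_at:
  fixes n :: nat and b :: int and \<delta> \<sigma> \<beta> \<theta> :: real
  defines "x \<equiv> ln (real n)"
  defines "E \<equiv> Lexp (1/3) x" and "H \<equiv> 1/\<delta> * Lexp (2/3) x" and "D \<equiv> \<delta> * (x / ln x) powr (1/3)"
  defines "K \<equiv> (\<sigma> / \<beta> + H / (\<beta> * E)) / (1 - 2*\<theta>) + 1"
  assumes \<beta>: "0 < \<beta>" and \<sigma>: "0 < \<sigma>" and \<theta>: "0 < \<theta>" "\<theta> \<le> 1/4"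
    and D: "1 \<le> D" "16 * D \<le> exp H" and y_large: "12 \<le> \<theta> * (\<beta> * E)" "16 * D \<le> exp (\<theta> * (\<beta> * E))"
    and b: "0 < b" "real_of_int b \<le> 1/2 * Lfun (real n) (1/3) \<sigma>"
  shows "exp (- (ln 2 + K * ln (2/\<theta>) + (K + 1) * ln (K + 1))) \<le> smooth_prob n \<delta> \<beta> b"
proof -
  define y where "y = exp (\<beta> * E)"
  define m1 where "m1 = \<lceil>2 powr (-1/D) * exp H\<rceil>"
  define m2 where "m2 = \<lfloor>exp H\<rfloor>"
  define T where "T = real_of_int (b * m2)"
  note window = integer_window_bounds[OF D, folded m1_def m2_def]
  have prob: "smooth_prob n \<delta> \<beta> b = real (smooth_count y (real_of_int (b * (m1 - 1))) T)
      / (real_of_int b * real_of_int (m2 - m1 + 1))"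
    using smooth_prob_eq_at[of \<delta> n b \<beta>] D b unfolding y_def m1_def m2_def T_def x_def E_def H_def D_def by simp
  have "0 < \<theta> * (\<beta> * E)" using y_large by linarith
  then have "0 < E" using \<theta> \<beta> by (simp add: zero_less_mult_iff)
  have "0 < H" using D by (smt (verit) exp_le_one_iff)
  have y: "1 < y" "ln y = \<beta> * E" "y powr \<theta> = exp (\<theta> * (\<beta> * E))"
    using \<open>0 < E\<close> \<beta> unfolding y_def by (simp_all add: powr_def)
  have "0 < T" unfolding T_def using window b by simp
  have "real_of_int b \<le> exp (\<sigma> * E)"
    using b unfolding E_def x_def Lfun_eq_exp_Lexp by simp
  then have "T \<le> exp (\<sigma> * E) * exp H"
    unfolding T_def using window b by (simp add: mult_mono)
  then have "ln T \<le> ln (exp (\<sigma> * E + H))"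
    using \<open>0 < T\<close> by (subst ln_le_cancel_iff) (auto simp: exp_add)
  then have "ln T / ln y \<le> (\<sigma> * E + H) / (\<beta> * E)"
    unfolding y(2) using \<open>0 < E\<close> \<beta> by (simp add: divide_right_mono)
  also have "\<dots> = \<sigma> / \<beta> + H / (\<beta> * E)" using \<open>0 < E\<close> \<beta> by (simp add: field_simps)
  finally obtain k :: nat where k: "T \<le> y powr (1 + real k * (1 - 2*\<theta>))" "real k \<le> K"
    using exists_nat_powr_ge[of T y "1 - 2*\<theta>" "\<sigma> / \<beta> + H / (\<beta> * E)"] \<open>0 < T\<close> \<theta> y \<beta> \<sigma> \<open>0 < E\<close> \<open>0 < H\<close>
    unfolding K_def by auto
  have "2 * real_of_int m2 \<le> y powr \<theta> * real_of_int (m2 - m1 + 1)"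
    using window mult_right_mono[OF y_large(2), of "real_of_int (m2 - m1 + 1)"]
    unfolding y by linarith
  then have "smooth_lower_coeff \<theta> k \<le> smooth_prob n \<delta> \<beta> b"
    unfolding prob T_def using y \<theta> b window k y_large unfolding T_def by (intro smooth_window_density_ge) auto
  moreover have "exp (- (ln 2 + K * ln (2/\<theta>) + (K + 1) * ln (K + 1))) \<le> smooth_lower_coeff \<theta> k"
    using k(2) \<theta> by (intro smooth_lower_coeff_ge) auto
  ultimately show ?thesis by linarith
qed

lemma smooth_prob_le_at:
  fixes n N :: nat and b :: int and \<delta> \<beta> \<eta> :: real
  defines "x \<equiv> ln (real n)"
  defines "E \<equiv> Lexp (1/3) x" and "H \<equiv> 1/\<delta> * Lexp (2/3) x" and "D \<equiv> \<delta> * (x / ln x) powr (1/3)"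
  assumes D: "1 \<le> D" "16 * D \<le> exp H" and b: "0 < b"
    and y: "exp (\<beta> * E) \<le> 2 ^ 2 ^ N" and \<eta>: "0 < \<eta>" "\<eta> \<le> 1/2"
  shows "smooth_prob n \<delta> \<beta> b
    \<le> 8 * D * exp (4 * (10 * exp (\<beta> * E) powr \<eta> + 10 * real N * exp (\<beta> * E) powr (\<eta>/2) + 2))
       / exp (\<eta> * (H - ln 2))"
proof -
  define m1 where "m1 = \<lceil>2 powr (-1/D) * exp H\<rceil>"
  define m2 where "m2 = \<lfloor>exp H\<rfloor>"
  define X where "X = exp (4 * (10 * exp (\<beta> * E) powr \<eta> + 10 * real N * exp (\<beta> * E) powr (\<eta>/2) + 2))"
  note window = integer_window_bounds[OF D, folded m1_def m2_def]
  have prob: "smooth_prob n \<delta> \<beta> b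
      = real (smooth_count (exp (\<beta> * E)) (real_of_int (b * (m1 - 1))) (real_of_int (b * m2)))
        / (real_of_int b * real_of_int (m2 - m1 + 1))"
    using smooth_prob_eq_at[of \<delta> n b \<beta>] D b unfolding m1_def m2_def x_def E_def H_def D_def by simp
  have "real_of_int m2 / real_of_int (m2 - m1 + 1) \<le> 8 * D"
    using window by (simp add: pos_divide_le_eq)
  moreover have "exp (\<eta> * (H - ln 2)) \<le> real_of_int (b * m2) powr \<eta>"
  proof -
    have "exp (\<eta> * (H - ln 2)) = (exp H / 2) powr \<eta>" by (simp add: powr_def ln_div)
    also have "\<dots> \<le> real_of_int (b * m2) powr \<eta>"
    proof (intro powr_mono2)
      have "real_of_int m2 \<le> real_of_int (b * m2)" using b window by (simp add: mult_le_cancel_right1)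
      then show "exp H / 2 \<le> real_of_int (b * m2)" using window by linarith
    qed (use \<eta> in auto)
    finally show ?thesis .
  qed
  ultimately have "real_of_int m2 / real_of_int (m2 - m1 + 1) * X / real_of_int (b * m2) powr \<eta>
      \<le> 8 * D * X / exp (\<eta> * (H - ln 2))"
    using window D by (intro frac_le mult_right_mono) (auto simp: X_def)
  moreover have "smooth_prob n \<delta> \<beta> b \<le> real_of_int m2 / real_of_int (m2 - m1 + 1) * X / real_of_int (b * m2) powr \<eta>"
    unfolding prob X_def using y \<eta> window b by (intro smooth_window_density_le) auto
  ultimately show ?thesis unfolding X_def by linarith
qed

text \<open>Rankin's exponent is \<open>\<eta> = log u / log y\<close>, so that \<open>y\<^sup>\<eta> = u\<close>.\<close>
lemma smooth_prob_le_at_rankin_exponent: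
  fixes n :: nat and b :: int and \<delta> \<beta> :: real
  defines "x \<equiv> ln (real n)"
  defines "E \<equiv> Lexp (1/3) x" and "H \<equiv> 1/\<delta> * Lexp (2/3) x" and "D \<equiv> \<delta> * (x / ln x) powr (1/3)"
  defines "u \<equiv> H / (\<beta> * E)"
  assumes D: "1 \<le> D" "16 * D \<le> exp H" and u: "1 < u" "ln u \<le> \<beta> * E / 2"
    and y_large: "ln 2 \<le> \<beta> * E" and b: "0 < b"
  shows "smooth_prob n \<delta> \<beta> b
    \<le> exp (ln (8 * D) + 4 * (10 * u + 10 * (log 2 (\<beta> * E / ln 2) + 1) * sqrt u + 2) - ln u / (\<beta> * E) * (H - ln 2))"
proof -
  define \<eta> where "\<eta> = ln u / (\<beta> * E)"
  define N where "N = nat \<lceil>log 2 (\<beta> * E / ln 2)\<rceil>"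
  have "0 < \<beta> * E" using y_large ln_2_ge_half by linarith
  have \<eta>: "0 < \<eta>" "\<eta> \<le> 1/2" using u \<open>0 < \<beta> * E\<close> unfolding \<eta>_def by (auto simp: field_simps)
  have "exp (\<beta> * E) \<le> 2 ^ 2 ^ N" unfolding N_def using y_large by (rule exp_le_two_power_two_power)
  have "real N \<le> log 2 (\<beta> * E / ln 2) + 1" unfolding N_def using y_large by (intro nat_ceiling_log_le) simp
  have "smooth_prob n \<delta> \<beta> b
      \<le> 8 * D * exp (4 * (10 * exp (\<beta> * E) powr \<eta> + 10 * real N * exp (\<beta> * E) powr (\<eta>/2) + 2))
        / exp (\<eta> * (H - ln 2))"
    using smooth_prob_le_at[where n = n and N = N and b = b and \<delta> = \<delta> and \<beta> = \<beta> and \<eta> = \<eta>] D b \<open>exp (\<beta> * E) \<le> 2 ^ 2 ^ N\<close> \<eta>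
    unfolding x_def E_def H_def D_def by simp
  also have "\<dots> \<le> 8 * D * exp (4 * (10 * u + 10 * (log 2 (\<beta> * E / ln 2) + 1) * sqrt u + 2)) / exp (\<eta> * (H - ln 2))"
    using exp_powr_ln_div[OF \<open>0 < \<beta> * E\<close>, of u] u D \<open>real N \<le> log 2 (\<beta> * E / ln 2) + 1\<close>
    unfolding \<eta>_def by (auto intro!: divide_right_mono mult_left_mono mult_right_mono)
  also have "\<dots> = exp (ln (8 * D) + 4 * (10 * u + 10 * (log 2 (\<beta> * E / ln 2) + 1) * sqrt u + 2) - \<eta> * (H - ln 2))"
    using D by (simp add: exp_add exp_diff)
  finally show ?thesis unfolding \<eta>_def .
qed

section \<open>Asymptotics\<close>

context
  fixes \<delta> \<beta> :: real
  assumes \<delta>: "0 < \<delta>" and \<beta>: "0 < \<beta>"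
begin

lemma eventually_window_conditions:
  "\<forall>\<^sub>F x in at_top. 1 \<le> \<delta> * (x / ln x) powr (1/3)
     \<and> 16 * (\<delta> * (x / ln x) powr (1/3)) \<le> exp (1/\<delta> * Lexp (2/3) x)"
proof (intro eventually_conj)
  show "\<forall>\<^sub>F x in at_top. 1 \<le> \<delta> * (x / ln x) powr (1/3)"
    using \<delta> by real_asymp
  show "\<forall>\<^sub>F x in at_top. 16 * (\<delta> * (x / ln x) powr (1/3)) \<le> exp (1/\<delta> * Lexp (2/3) x)"
    unfolding Lexp_def using \<delta> by real_asymp
qed

lemma eventually_smooth_prob_ge_conditions:
  assumes "0 < \<theta>"
  shows "\<forall>\<^sub>F x in at_top. 12 \<le> \<theta> * (\<beta> * Lexp (1/3) x)
     \<and> 16 * (\<delta> * (x / ln x) powr (1/3)) \<le> exp (\<theta> * (\<beta> * Lexp (1/3) x))"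
proof (intro eventually_conj)
  show "\<forall>\<^sub>F x in at_top. 12 \<le> \<theta> * (\<beta> * Lexp (1/3) x)"
    unfolding Lexp_def using \<beta> assms by real_asymp
  show "\<forall>\<^sub>F x in at_top. 16 * (\<delta> * (x / ln x) powr (1/3)) \<le> exp (\<theta> * (\<beta> * Lexp (1/3) x))"
    unfolding Lexp_def using \<delta> \<beta> assms by real_asymp
qed

text \<open>The number of recursion steps grows like \<open>u/\<alpha>\<close> with \<open>log u \<sim> (log x)/3\<close>, whence the exponent
  \<open>(u/\<alpha>) log u \<sim> Lexp (1/3) x / (3 \<alpha> \<beta> \<delta>)\<close>.\<close>
lemma smooth_prob_ge_exponent_asymptotics:
  assumes "0 < \<sigma>" "0 < \<theta>" "0 < \<alpha>"
  defines "K \<equiv> \<lambda>x. (\<sigma> / \<beta> + 1/\<delta> * Lexp (2/3) x / (\<beta> * Lexp (1/3) x)) / \<alpha> + 1"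
  shows "((\<lambda>x. (ln 2 + K x * ln (2/\<theta>) + (K x + 1) * ln (K x + 1)) / (1 / (3*\<beta>*\<delta>) * Lexp (1/3) x))
           \<longlongrightarrow> 1/\<alpha>) at_top"
  unfolding K_def Lexp_def using assms \<delta> \<beta> by (real_asymp simp add: field_simps)

lemma eventually_smooth_prob_le_conditions:
  "\<forall>\<^sub>F x in at_top. 1 < 1/\<delta> * Lexp (2/3) x / (\<beta> * Lexp (1/3) x)
     \<and> ln (1/\<delta> * Lexp (2/3) x / (\<beta> * Lexp (1/3) x)) \<le> \<beta> * Lexp (1/3) x / 2
     \<and> ln 2 \<le> \<beta> * Lexp (1/3) x"
proof (intro eventually_conj)
  show "\<forall>\<^sub>F x in at_top. 1 < 1/\<delta> * Lexp (2/3) x / (\<beta> * Lexp (1/3) x)"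
    unfolding Lexp_def using \<delta> \<beta> by real_asymp
  show "\<forall>\<^sub>F x in at_top. ln (1/\<delta> * Lexp (2/3) x / (\<beta> * Lexp (1/3) x)) \<le> \<beta> * Lexp (1/3) x / 2"
    unfolding Lexp_def using \<delta> \<beta> by real_asymp
  show "\<forall>\<^sub>F x in at_top. ln 2 \<le> \<beta> * Lexp (1/3) x"
    unfolding Lexp_def using \<beta> by real_asymp
qed

lemma smooth_prob_le_exponent_asymptotics:
  defines "u \<equiv> \<lambda>x. 1/\<delta> * Lexp (2/3) x / (\<beta> * Lexp (1/3) x)"
  shows "((\<lambda>x. (ln (u x) / (\<beta> * Lexp (1/3) x) * (1/\<delta> * Lexp (2/3) x - ln 2)
      - ln (8 * (\<delta> * (x / ln x) powr (1/3)))
      - 4 * (10 * u x + 10 * (log 2 (\<beta> * Lexp (1/3) x / ln 2) + 1) * sqrt (u x) + 2))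
      / (1 / (3*\<beta>*\<delta>) * Lexp (1/3) x)) \<longlongrightarrow> 1) at_top"
  unfolding u_def Lexp_def log_def using \<delta> \<beta> by (real_asymp simp add: field_simps)

end

lemma eventually_Lexp_third_pos: "\<forall>\<^sub>F x in at_top. 0 < Lexp (1/3) x"
  unfolding Lexp_def by real_asymp

lemma eventually_le_mult_of_tendsto_ratio:
  fixes f g :: "'a \<Rightarrow> real"
  assumes "((\<lambda>x. f x / g x) \<longlongrightarrow> l) F" "l < L" "\<forall>\<^sub>F x in F. 0 < g x"
  shows "\<forall>\<^sub>F x in F. f x \<le> L * g x"
proof -
  have "\<forall>\<^sub>F x in F. f x / g x < L" using assms(1,2) by (rule order_tendstoD(2))
  with assms(3) show ?thesis by eventually_elim (simp add: pos_divide_less_eq)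
qed

lemma eventually_mult_le_of_tendsto_ratio:
  fixes f g :: "'a \<Rightarrow> real"
  assumes "((\<lambda>x. f x / g x) \<longlongrightarrow> l) F" "L < l" "\<forall>\<^sub>F x in F. 0 < g x"
  shows "\<forall>\<^sub>F x in F. L * g x \<le> f x"
proof -
  have "\<forall>\<^sub>F x in F. L < f x / g x" using assms(1,2) by (rule order_tendstoD(1))
  with assms(3) show ?thesis by eventually_elim (simp add: pos_less_divide_eq)
qed

lemma eventually_ln_sequentially:
  assumes "\<forall>\<^sub>F x in at_top. P x"
  shows "\<forall>\<^sub>F n in sequentially. P (ln (real n))"
  using assms filterlim_compose[OF ln_at_top filterlim_real_sequentially] by (rule eventually_compose_filterlim)

lemma smooth_prob_ge_eventually:
  fixes \<delta> \<sigma> \<beta> e :: real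
  assumes \<delta>: "0 < \<delta>" and \<sigma>: "0 < \<sigma>" and \<beta>: "0 < \<beta>" and "0 < e"
  shows "\<forall>\<^sub>F n in sequentially. \<forall>b::int. 0 < b \<and> real_of_int b \<le> 1/2 * Lfun (real n) (1/3) \<sigma> \<longrightarrow>
           inverse (Lfun (real n) (1/3) (1 / (3 * \<beta> * \<delta>) * (1 + e))) \<le> smooth_prob n \<delta> \<beta> b"
proof -
  define \<theta> where "\<theta> = e / (4 * (1 + e))"
  define c where "c = 1 / (3 * \<beta> * \<delta>)"
  define K where "K x = (\<sigma> / \<beta> + 1/\<delta> * Lexp (2/3) x / (\<beta> * Lexp (1/3) x)) / (1 - 2*\<theta>) + 1" for x
  define Q where "Q x = ln 2 + K x * ln (2/\<theta>) + (K x + 1) * ln (K x + 1)" for x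
  have "1 - 2*\<theta> = (2 + e) / (2 * (1 + e))" unfolding \<theta>_def using \<open>0 < e\<close> by (simp add: field_simps)
  moreover have "0 < e + e * e" using \<open>0 < e\<close> by (intro add_pos_pos mult_pos_pos)
  then have "2 * (1 + e) / (2 + e) < 1 + e" using \<open>0 < e\<close> by (simp add: field_simps)
  ultimately have \<theta>: "0 < \<theta>" "\<theta> \<le> 1/4" "0 < 1 - 2*\<theta>" "1 / (1 - 2*\<theta>) < 1 + e"
    using \<open>0 < e\<close> unfolding \<theta>_def by (simp_all add: field_simps)
  have "\<forall>\<^sub>F x in at_top. 0 < c * Lexp (1/3) x"
    using eventually_Lexp_third_pos by eventually_elim (simp add: c_def \<delta> \<beta>)
  then have "\<forall>\<^sub>F x in at_top. Q x \<le> (1 + e) * (c * Lexp (1/3) x)"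
    using smooth_prob_ge_exponent_asymptotics[OF \<delta> \<beta> \<sigma> \<theta>(1,3)] \<theta>(4)
    unfolding Q_def K_def c_def by (rule eventually_le_mult_of_tendsto_ratio[rotated 2])
  then have "\<forall>\<^sub>F x in at_top. Q x \<le> (1 + e) * (c * Lexp (1/3) x)
      \<and> 1 \<le> \<delta> * (x / ln x) powr (1/3) \<and> 16 * (\<delta> * (x / ln x) powr (1/3)) \<le> exp (1/\<delta> * Lexp (2/3) x)
      \<and> 12 \<le> \<theta> * (\<beta> * Lexp (1/3) x) \<and> 16 * (\<delta> * (x / ln x) powr (1/3)) \<le> exp (\<theta> * (\<beta> * Lexp (1/3) x))"
    using eventually_window_conditions[OF \<delta> \<beta>] eventually_smooth_prob_ge_conditions[OF \<delta> \<beta> \<theta>(1)]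
    by eventually_elim blast
  from eventually_ln_sequentially[OF this] show ?thesis
  proof eventually_elim
    case (elim n)
    show ?case
    proof (intro allI impI)
      fix b :: int assume b: "0 < b \<and> real_of_int b \<le> 1/2 * Lfun (real n) (1/3) \<sigma>"
      have "inverse (Lfun (real n) (1/3) (1 / (3 * \<beta> * \<delta>) * (1 + e)))
          = exp (- ((1 + e) * (c * Lexp (1/3) (ln (real n)))))"
        by (simp add: Lfun_eq_exp_Lexp exp_minus c_def mult_ac)
      also have "\<dots> \<le> exp (- Q (ln (real n)))" using elim by simp
      also have "\<dots> \<le> smooth_prob n \<delta> \<beta> b"
        unfolding Q_def K_def by (rule smooth_prob_ge_at) (use \<beta> \<sigma> \<theta> elim b in auto)
      finally show "inverse (Lfun (real n) (1/3) (1 / (3 * \<beta> * \<delta>) * (1 + e))) \<le> smooth_prob n \<delta> \<beta> b" .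
    qed
  qed
qed

lemma smooth_prob_le_eventually:
  fixes \<delta> \<beta> e :: real
  assumes \<delta>: "0 < \<delta>" and \<beta>: "0 < \<beta>" and "0 < e"
  shows "\<forall>\<^sub>F n in sequentially. \<forall>b::int. 0 < b \<longrightarrow>
           smooth_prob n \<delta> \<beta> b \<le> inverse (Lfun (real n) (1/3) (1 / (3 * \<beta> * \<delta>) * (1 - e)))"
proof -
  define c where "c = 1 / (3 * \<beta> * \<delta>)"
  define u where "u x = 1/\<delta> * Lexp (2/3) x / (\<beta> * Lexp (1/3) x)" for x
  define R where "R x = ln (u x) / (\<beta> * Lexp (1/3) x) * (1/\<delta> * Lexp (2/3) x - ln 2)
      - ln (8 * (\<delta> * (x / ln x) powr (1/3)))
      - 4 * (10 * u x + 10 * (log 2 (\<beta> * Lexp (1/3) x / ln 2) + 1) * sqrt (u x) + 2)" for x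
  have "\<forall>\<^sub>F x in at_top. 0 < c * Lexp (1/3) x"
    using eventually_Lexp_third_pos by eventually_elim (simp add: c_def \<delta> \<beta>)
  then have "\<forall>\<^sub>F x in at_top. (1 - e) * (c * Lexp (1/3) x) \<le> R x"
    using smooth_prob_le_exponent_asymptotics[OF \<delta> \<beta>] \<open>0 < e\<close>
    unfolding R_def u_def c_def by (intro eventually_mult_le_of_tendsto_ratio[rotated 2]) auto
  then have "\<forall>\<^sub>F x in at_top. (1 - e) * (c * Lexp (1/3) x) \<le> R x
      \<and> 1 \<le> \<delta> * (x / ln x) powr (1/3) \<and> 16 * (\<delta> * (x / ln x) powr (1/3)) \<le> exp (1/\<delta> * Lexp (2/3) x)
      \<and> 1 < u x \<and> ln (u x) \<le> \<beta> * Lexp (1/3) x / 2 \<and> ln 2 \<le> \<beta> * Lexp (1/3) x"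
    using eventually_window_conditions[OF \<delta> \<beta>] eventually_smooth_prob_le_conditions[OF \<delta> \<beta>]
    unfolding u_def by eventually_elim blast
  from eventually_ln_sequentially[OF this] show ?thesis
  proof eventually_elim
    case (elim n)
    show ?case
    proof (intro allI impI)
      fix b :: int assume "0 < b"
      have "smooth_prob n \<delta> \<beta> b \<le> exp (- R (ln (real n)))"
        using smooth_prob_le_at_rankin_exponent[of \<delta> n \<beta> b] elim \<open>0 < b\<close> unfolding R_def u_def by (simp add: algebra_simps)
      also have "\<dots> \<le> exp (- ((1 - e) * (c * Lexp (1/3) (ln (real n)))))" using elim by simp
      also have "\<dots> = inverse (Lfun (real n) (1/3) (1 / (3 * \<beta> * \<delta>) * (1 - e)))"
        by (simp add: Lfun_eq_exp_Lexp exp_minus c_def mult_ac)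
      finally show "smooth_prob n \<delta> \<beta> b \<le> inverse (Lfun (real n) (1/3) (1 / (3 * \<beta> * \<delta>) * (1 - e)))" .
    qed
  qed
qed

theorem proposition5p5:
  fixes \<delta> \<sigma> \<beta> :: real
  assumes "\<delta> > 0" and "\<sigma> > 0" and "\<beta> > 0"
  shows "\<forall>\<epsilon>>0. \<forall>\<^sub>F n in sequentially. \<forall>b::int.
           0 < b \<and> real_of_int b \<le> 1/2 * Lfun (real n) (1/3) \<sigma> \<longrightarrow>
             inverse (Lfun (real n) (1/3) (1 / (3 * \<beta> * \<delta>) * (1 + \<epsilon>))) \<le> smooth_prob n \<delta> \<beta> b \<and>
             smooth_prob n \<delta> \<beta> b \<le> inverse (Lfun (real n) (1/3) (1 / (3 * \<beta> * \<delta>) * (1 - \<epsilon>)))"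
proof (intro allI impI)
  fix \<epsilon> :: real
  assume "0 < \<epsilon>"
  show "\<forall>\<^sub>F n in sequentially. \<forall>b::int.
           0 < b \<and> real_of_int b \<le> 1/2 * Lfun (real n) (1/3) \<sigma> \<longrightarrow>
             inverse (Lfun (real n) (1/3) (1 / (3 * \<beta> * \<delta>) * (1 + \<epsilon>))) \<le> smooth_prob n \<delta> \<beta> b \<and>
             smooth_prob n \<delta> \<beta> b \<le> inverse (Lfun (real n) (1/3) (1 / (3 * \<beta> * \<delta>) * (1 - \<epsilon>)))"
    using smooth_prob_ge_eventually[OF assms \<open>0 < \<epsilon>\<close>] smooth_prob_le_eventually[OF assms(1,3) \<open>0 < \<epsilon>\<close>]
    by eventually_elim blast
qed

end
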